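(* Let $\lambda$ be a partition with $n$ parts and let $\beta \in U_\lambda(n)$. If $\beta \in UGC_\lambda(n) \cap UBP_\lambda(n)$, then $s_\lambda(\beta;x) = \det\big( h_{\lambda_j - j + i}(i, \beta_j; x) \big)_{i,j=1}^n$, the $n\times n$ determinant whose $(i,j)$ entry is $h_{\lambda_j - j + i}(i,\beta_j;x)$.
   Context: Fix an integer $n \geq 1$ and write $[k] = \{1,\dots,k\}$. A partition is $\lambda = (\lambda_1,\dots,\lambda_n)$ with $\lambda_1 \geq \dots \geq \lambda_n \geq 0$ integers. Let $R_\lambda \subseteq [n-1]$ be the set of $q \in [n-1]$ with $\lambda_q > \lambda_{q+1}$; write its elements $q_1 < \dots < q_r$, and set $q_0 := 0$, $q_{r+1} := n$. For $h \in [r+1]$ the $h$-th carrel is the index interval $\{q_{h-1}+1,\dots,q_h\}$. A $\lambda$-tuple is an $n$-tuple $\beta$ with entries in $[n]$, considered with this carrel structure; it is upper if $\beta_i \geq i$ for all $i$. $U_\lambda(n)$ is the set of upper $\lambda$-tuples, ordered entrywise. Critical indices: for $\beta \in U_\lambda(n)$ and $h \in [r+1]$, set $x_1 := q_h$; given $x_{u-1}$, if some index $x$ with $q_{h-1} < x < x_{u-1}$ satisfies $\beta_{x_{u-1}} - \beta_x > x_{u-1} - x$, let $x_u$ be the largest such $x$, otherwise stop. The $x_u$ are the critical indices of $\beta$ in carrel $h$; the pairs $(x_u,\beta_{x_u})$ form its critical list. For $i \in [n]$ let $x(i)$ be the smallest critical index in the carrel of $i$ with $x(i) \geq i$. The $\lambda$-platform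 is $\Xi_\lambda(\beta) := \xi$ with $\xi_i := \beta_{x(i)}$. The critical list is a flag critical list if for every $h \in [r]$, $\beta_{q_h} \leq \beta_k$ where $k$ is the smallest critical index of $\beta$ in carrel $h+1$. $UGC_\lambda(n)$ is the set of $\beta \in U_\lambda(n)$ with flag critical list; $UBP_\lambda(n)$ is the set of $\beta \in U_\lambda(n)$ with $\beta \leq \Xi_\lambda(\beta)$ entrywise. A semistandard tableau of shape $\lambda$ is a filling of the Young diagram of $\lambda$ (row $i$ has $\lambda_i$ boxes, left justified) with values in $[n]$, weakly increasing left to right along rows and strictly increasing top to bottom down columns. For $\beta \in U_\lambda(n)$, the row bound sum is $s_\lambda(\beta;x) := \sum_T \prod_{k=1}^n x_k^{\theta_k(T)}$, summed over the semistandard tableaux $T$ of shape $\lambda$ all of whose values in row $i$ are at most $\beta_i$ (for every $i$), where $\theta_k(T)$ is the number of values of $T$ equal to $k$. For integers $u$, $i \geq 1$, $k \geq 1$: $h_u(i,k;x) := 0$ if $u < 0$, and otherwise $h_u(i,k;x) := \sum x_{t_1}\cdots x_{t_u}$ summed over $i \leq t_1 \leq \dots \leq t_u \leq k$ (so $h_0 = 1$). *)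

theory Defs
  imports Main "Jordan_Normal_Form.Determinant"
begin

(* Conventions: tuples/partitions are functions nat => nat, meaningful on indices 1..n. *)

definition is_partition :: "nat \<Rightarrow> (nat \<Rightarrow> nat) \<Rightarrow> bool" where
  "is_partition n lam \<longleftrightarrow> (\<forall>i. 1 \<le> i \<and> i < n \<longrightarrow> lam (i+1) \<le> lam i)"

definition Rset :: "nat \<Rightarrow> (nat \<Rightarrow> nat) \<Rightarrow> nat set" where
  "Rset n lam = {q. 1 \<le> q \<and> q \<le> n - 1 \<and> lam q > lam (q+1)}"

definition qq :: "nat \<Rightarrow> (nat \<Rightarrow> nat) \<Rightarrow> nat \<Rightarrow> nat" where
  "qq n lam h = sorted_list_of_set (Rset n lam \<union> {0, n}) ! h"

definition rr :: "nat \<Rightarrow> (nat \<Rightarrow> nat) \<Rightarrow> nat" where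
  "rr n lam = card (Rset n lam)"

definition carrel_of :: "nat \<Rightarrow> (nat \<Rightarrow> nat) \<Rightarrow> nat \<Rightarrow> nat" where
  "carrel_of n lam i = (THE h. 1 \<le> h \<and> h \<le> rr n lam + 1 \<and> qq n lam (h-1) < i \<and> i \<le> qq n lam h)"

definition upper_tuple :: "nat \<Rightarrow> (nat \<Rightarrow> nat) \<Rightarrow> bool" where
  "upper_tuple n \<beta> \<longleftrightarrow> (\<forall>i. 1 \<le> i \<and> i \<le> n \<longrightarrow> i \<le> \<beta> i \<and> \<beta> i \<le> n)"

definition jump :: "(nat \<Rightarrow> nat) \<Rightarrow> nat \<Rightarrow> nat \<Rightarrow> bool" where
  "jump \<beta> y x \<longleftrightarrow> int (\<beta> y) - int (\<beta> x) > int y - int x"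

inductive is_crit :: "nat \<Rightarrow> nat \<Rightarrow> (nat \<Rightarrow> nat) \<Rightarrow> nat \<Rightarrow> bool"
  for lo hi \<beta> where
  start: "is_crit lo hi \<beta> hi"
| step: "\<lbrakk> is_crit lo hi \<beta> y; lo < x; x < y; jump \<beta> y x;
           \<forall>x'. lo < x' \<and> x' < y \<and> jump \<beta> y x' \<longrightarrow> x' \<le> x \<rbrakk> \<Longrightarrow> is_crit lo hi \<beta> x"

definition crit_in :: "nat \<Rightarrow> (nat \<Rightarrow> nat) \<Rightarrow> (nat \<Rightarrow> nat) \<Rightarrow> nat \<Rightarrow> nat \<Rightarrow> bool" where
  "crit_in n lam \<beta> h x \<longleftrightarrow> is_crit (qq n lam (h-1)) (qq n lam h) \<beta> x"

definition xcrit :: "nat \<Rightarrow> (nat \<Rightarrow> nat) \<Rightarrow> (nat \<Rightarrow> nat) \<Rightarrow> nat \<Rightarrow> nat" where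
  "xcrit n lam \<beta> i = (LEAST x. crit_in n lam \<beta> (carrel_of n lam i) x \<and> i \<le> x)"

definition platform :: "nat \<Rightarrow> (nat \<Rightarrow> nat) \<Rightarrow> (nat \<Rightarrow> nat) \<Rightarrow> nat \<Rightarrow> nat" where
  "platform n lam \<beta> i = \<beta> (xcrit n lam \<beta> i)"

definition flag_critical :: "nat \<Rightarrow> (nat \<Rightarrow> nat) \<Rightarrow> (nat \<Rightarrow> nat) \<Rightarrow> bool" where
  "flag_critical n lam \<beta> \<longleftrightarrow>
     (\<forall>h. 1 \<le> h \<and> h \<le> rr n lam \<longrightarrow>
        \<beta> (qq n lam h) \<le> \<beta> (LEAST x. crit_in n lam \<beta> (h+1) x))"

definition UGC :: "nat \<Rightarrow> (nat \<Rightarrow> nat) \<Rightarrow> (nat \<Rightarrow> nat) set" where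
  "UGC n lam = {\<beta>. upper_tuple n \<beta> \<and> flag_critical n lam \<beta>}"

definition UBP :: "nat \<Rightarrow> (nat \<Rightarrow> nat) \<Rightarrow> (nat \<Rightarrow> nat) set" where
  "UBP n lam = {\<beta>. upper_tuple n \<beta> \<and> (\<forall>i. 1 \<le> i \<and> i \<le> n \<longrightarrow> \<beta> i \<le> platform n lam \<beta> i)}"

definition in_shape :: "nat \<Rightarrow> (nat \<Rightarrow> nat) \<Rightarrow> nat \<Rightarrow> nat \<Rightarrow> bool" where
  "in_shape n lam i j \<longleftrightarrow> 1 \<le> i \<and> i \<le> n \<and> 1 \<le> j \<and> j \<le> lam i"

definition SSYT :: "nat \<Rightarrow> (nat \<Rightarrow> nat) \<Rightarrow> (nat \<Rightarrow> nat \<Rightarrow> nat) set" where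
  "SSYT n lam = {T. (\<forall>i j. \<not> in_shape n lam i j \<longrightarrow> T i j = 0)
      \<and> (\<forall>i j. in_shape n lam i j \<longrightarrow> 1 \<le> T i j \<and> T i j \<le> n)
      \<and> (\<forall>i j. in_shape n lam i j \<and> in_shape n lam i (j+1) \<longrightarrow> T i j \<le> T i (j+1))
      \<and> (\<forall>i j. in_shape n lam i j \<and> in_shape n lam (i+1) j \<longrightarrow> T i j < T (i+1) j)}"

definition theta :: "nat \<Rightarrow> (nat \<Rightarrow> nat) \<Rightarrow> (nat \<Rightarrow> nat \<Rightarrow> nat) \<Rightarrow> nat \<Rightarrow> nat" where
  "theta n lam T k = card {(i, j). in_shape n lam i j \<and> T i j = k}"

definition row_bound_sum :: "nat \<Rightarrow> (nat \<Rightarrow> nat) \<Rightarrow> (nat \<Rightarrow> nat) \<Rightarrow> (nat \<Rightarrow> 'a::comm_ring_1) \<Rightarrow> 'a" where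
  "row_bound_sum n lam \<beta> x =
     (\<Sum>T \<in> {T \<in> SSYT n lam. \<forall>i j. in_shape n lam i j \<longrightarrow> T i j \<le> \<beta> i}.
        \<Prod>k = 1..n. x k ^ theta n lam T k)"

definition hcomp :: "int \<Rightarrow> nat \<Rightarrow> nat \<Rightarrow> (nat \<Rightarrow> 'a::comm_ring_1) \<Rightarrow> 'a" where
  "hcomp u i k x = (if u < 0 then 0 else
     (\<Sum>t \<in> {t. (\<forall>a. a \<notin> {1..nat u} \<longrightarrow> t a = 0)
               \<and> (\<forall>a \<in> {1..nat u}. i \<le> t a \<and> t a \<le> k)
               \<and> (\<forall>a. 1 \<le> a \<and> a < nat u \<longrightarrow> t a \<le> t (a+1))}.
        \<Prod>a = 1..nat u. x (t a)))"

end

theory Submission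
  imports Defs
begin

text \<open>For a partition \<open>\<lambda>\<close> and a weakly increasing flag \<open>b\<close> with \<open>j \<le> b\<^sub>j \<le> n\<close>, the
  flagged Jacobi--Trudi identity \<open>s\<^sub>\<lambda>(b; x) = det (h\<^bsub>\<lambda>\<^sub>j - j + i\<^esub>(i, b\<^sub>j; x))\<close> holds.
  It is proved by induction on \<open>n\<close>: the cells of a tableau holding the letter \<open>n\<close> form a
  horizontal strip \<open>\<lambda>/\<mu>\<close>, and expanding every column with \<open>b\<^sub>j = n\<close> by
  \<open>h\<^sub>u(i, n) = h\<^sub>u(i, n - 1) + x\<^sub>n h\<^bsub>u - 1\<^esub>(i, n)\<close> yields the same sum over strips, with the last
  row of the determinant reduced to a unit vector.

  For \<open>\<beta>\<close> as in the theorem, the platform \<open>\<Xi>(\<beta>)\<close> is such a flag (its monotonicity across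
  carrels is the flag condition) and bounds exactly the same tableaux: \<open>\<beta> \<le> \<Xi>(\<beta>)\<close>, and an entry
  in row \<open>i\<close> lies \<open>x(i) - i\<close> below an entry of row \<open>x(i)\<close>, while no jump leads from \<open>x(i)\<close>
  back to \<open>i\<close>. Finally the determinant does not change when the bound of column \<open>p\<close> is lowered
  from \<open>\<beta>\<^bsub>x(p)\<^esub>\<close> to \<open>\<beta>\<^sub>p\<close>: \<open>\<lambda>\<close> is constant on \<open>[p, x(p)]\<close>, so the new column is the old
  one minus a combination of the columns \<open>p + 1, \<dots>, x(p)\<close>, which all carry the bound \<open>\<beta>\<^bsub>x(p)\<^esub>\<close>.\<close>

lemma finite_funs_bounded_on:
  fixes d :: "'a \<Rightarrow> nat"
  assumes "finite A"
  shows "finite {t. (\<forall>a. a \<notin> A \<longrightarrow> t a = d a) \<and> (\<forall>a\<in>A. t a \<le> K)}"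
proof -
  let ?ext = "\<lambda>f a. if a \<in> A then f a else d a"
  have "{t. (\<forall>a. a \<notin> A \<longrightarrow> t a = d a) \<and> (\<forall>a\<in>A. t a \<le> K)} \<subseteq> ?ext ` (A \<rightarrow>\<^sub>E {0..K})"
  proof
    fix t assume "t \<in> {t. (\<forall>a. a \<notin> A \<longrightarrow> t a = d a) \<and> (\<forall>a\<in>A. t a \<le> K)}"
    then show "t \<in> ?ext ` (A \<rightarrow>\<^sub>E {0..K})"
      by (intro image_eqI[where x = "restrict t A"]) auto
  qed
  moreover have "finite (?ext ` (A \<rightarrow>\<^sub>E {0..K}))"
    using assms by (intro finite_imageI finite_PiE) auto
  ultimately show ?thesis
    by (rule finite_subset)
qed

lemma chain_mono_between:
  fixes f :: "nat \<Rightarrow> 'a::order"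
  assumes step: "\<And>k. a \<le> k \<Longrightarrow> k < b \<Longrightarrow> f k \<le> f (Suc k)"
    and "a \<le> i" "i \<le> j" "j \<le> b"
  shows "f i \<le> f j"
  using assms(3,4)
proof (induction j)
  case (Suc j)
  then show ?case
    using step[of j] assms(2) by (cases "i = Suc j") (auto intro: order_trans)
qed simp

lemma chain_antimono_between:
  fixes f :: "nat \<Rightarrow> 'a::order"
  assumes step: "\<And>k. a \<le> k \<Longrightarrow> k < b \<Longrightarrow> f (Suc k) \<le> f k"
    and "a \<le> i" "i \<le> j" "j \<le> b"
  shows "f j \<le> f i"
  using assms(3,4)
proof (induction j)
  case (Suc j)
  then show ?case
    using step[of j] assms(2) by (cases "i = Suc j") (auto intro: order_trans)
qed simp

lemma prod_mat_col_remove: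
  assumes "\<sigma> permutes {0..<n}" "p < n"
  shows "(\<Prod>j<n. mat n n (\<lambda>(i,j). F i j) $$ (\<sigma> j, j)) = F (\<sigma> p) p * (\<Prod>j\<in>{..<n}-{p}. F (\<sigma> j) j)"
proof -
  have "\<And>j. j < n \<Longrightarrow> \<sigma> j < n"
    using assms(1) permutes_in_image by fastforce
  then have "(\<Prod>j<n. mat n n (\<lambda>(i,j). F i j) $$ (\<sigma> j, j)) = (\<Prod>j<n. F (\<sigma> j) j)"
    by (intro prod.cong) auto
  also have "\<dots> = F (\<sigma> p) p * (\<Prod>j\<in>{..<n}-{p}. F (\<sigma> j) j)"
    using assms(2) by (subst prod.remove[of _ p]) auto
  finally show ?thesis .
qed

lemma det_mat_sum_col:
  fixes F :: "nat \<Rightarrow> nat \<Rightarrow> 'a::comm_ring_1"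
  assumes "finite S" "p < n"
  shows "det (mat n n (\<lambda>(i,j). if j = p then (\<Sum>s\<in>S. c s * g s i) else F i j))
       = (\<Sum>s\<in>S. c s * det (mat n n (\<lambda>(i,j). if j = p then g s i else F i j)))"
proof -
  let ?P = "{\<sigma>. \<sigma> permutes {0..<n}}"
  let ?R = "\<lambda>\<sigma>. \<Prod>j\<in>{..<n}-{p}. F (\<sigma> j) j"
  have rest: "(\<Prod>j\<in>{..<n}-{p}. (\<lambda>i j. if j = p then G i else F i j) (\<sigma> j) j) = ?R \<sigma>" for G \<sigma>
    by (rule prod.cong) auto
  have det_col_p: "det (mat n n (\<lambda>(i,j). if j = p then G i else F i j))
      = (\<Sum>\<sigma>\<in>?P. signof \<sigma> * (G (\<sigma> p) * ?R \<sigma>))" for G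
  proof -
    let ?H = "\<lambda>i j. if j = p then G i else F i j"
    have "det (mat n n (\<lambda>(i,j). ?H i j))
        = (\<Sum>\<sigma>\<in>?P. signof \<sigma> * (\<Prod>j<n. mat n n (\<lambda>(i,j). ?H i j) $$ (\<sigma> j, j)))"
      by (rule det_col) simp
    also have "\<dots> = (\<Sum>\<sigma>\<in>?P. signof \<sigma> * (G (\<sigma> p) * ?R \<sigma>))"
      using assms(2) rest[of G] by (intro sum.cong refl) (subst prod_mat_col_remove[of _ n p ?H], auto)
    finally show ?thesis
      by simp
  qed
  have "det (mat n n (\<lambda>(i,j). if j = p then (\<Sum>s\<in>S. c s * g s i) else F i j))
      = (\<Sum>\<sigma>\<in>?P. \<Sum>s\<in>S. c s * (signof \<sigma> * (g s (\<sigma> p) * ?R \<sigma>)))"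
    unfolding det_col_p by (rule sum.cong) (auto simp: sum_distrib_left sum_distrib_right ac_simps)
  also have "\<dots> = (\<Sum>s\<in>S. c s * (\<Sum>\<sigma>\<in>?P. signof \<sigma> * (g s (\<sigma> p) * ?R \<sigma>)))"
    by (subst sum.swap) (simp add: sum_distrib_left)
  finally show ?thesis
    unfolding det_col_p .
qed

lemma det_mat_zero_col:
  fixes F :: "nat \<Rightarrow> nat \<Rightarrow> 'a::comm_ring_1"
  assumes "p < n" "\<And>i. i < n \<Longrightarrow> F i p = 0"
  shows "det (mat n n (\<lambda>(i,j). F i j)) = 0"
proof -
  have "det (mat n n (\<lambda>(i,j). F i j))
      = det (mat n n (\<lambda>(i,j). if j = p then (\<Sum>s\<in>({}::nat set). 0 * 0) else F i j))"
    using assms(2) by (intro arg_cong[where f = det] eq_matI) auto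
  also have "\<dots> = (\<Sum>s\<in>({}::nat set). 0 * det (mat n n (\<lambda>(i,j). if j = p then 0 else F i j)))"
    by (rule det_mat_sum_col) (use assms(1) in auto)
  finally show ?thesis
    by simp
qed

lemma det_mat_identical_cols:
  fixes F :: "nat \<Rightarrow> nat \<Rightarrow> 'a::comm_ring_1"
  assumes "a < n" "b < n" "a \<noteq> b" "\<And>i. i < n \<Longrightarrow> F i a = F i b"
  shows "det (mat n n (\<lambda>(i,j). F i j)) = 0"
  by (rule det_identical_columns[of _ n a b]) (use assms in \<open>auto intro!: eq_vecI\<close>)

lemma det_mat_zero_row:
  fixes F :: "nat \<Rightarrow> nat \<Rightarrow> 'a::comm_ring_1"
  assumes "k < n" "\<And>j. j < n \<Longrightarrow> F k j = 0"
  shows "det (mat n n (\<lambda>(i,j). F i j)) = 0"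
proof -
  have "(\<Prod>i = 0..<n. mat n n (\<lambda>(i,j). F i j) $$ (i, \<sigma> i)) = 0" if "\<sigma> permutes {0..<n}" for \<sigma>
    using that assms permutes_in_image[of \<sigma> "{0..<n}" k] by (intro prod_zero bexI[of _ k]) auto
  then show ?thesis
    by (subst det_def'[of _ n]) auto
qed

lemma det_mat_last_row_unit:
  fixes F :: "nat \<Rightarrow> nat \<Rightarrow> 'a::comm_ring_1"
  assumes "\<And>j. j \<le> m \<Longrightarrow> F m j = (if j = m then 1 else 0)"
  shows "det (mat (Suc m) (Suc m) (\<lambda>(i,j). F i j)) = det (mat m m (\<lambda>(i,j). F i j))"
proof -
  let ?A = "mat (Suc m) (Suc m) (\<lambda>(i,j). F i j)"
  have "det ?A = (\<Sum>j<Suc m. ?A $$ (m,j) * cofactor ?A m j)"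
    by (rule laplace_expansion_row) auto
  also have "\<dots> = ?A $$ (m,m) * cofactor ?A m m"
    using assms by (subst sum.remove[of _ m]) auto
  also have "\<dots> = det (mat_delete ?A m m)"
    using assms by (simp add: cofactor_def)
  also have "mat_delete ?A m m = mat m m (\<lambda>(i,j). F i j)"
    by (intro eq_matI) (auto simp: mat_delete_def)
  finally show ?thesis .
qed

section \<open>Complete homogeneous polynomials\<close>

definition mono_words :: "nat \<Rightarrow> nat \<Rightarrow> nat \<Rightarrow> (nat \<Rightarrow> nat) set" where
  "mono_words N i k = {t. (\<forall>a. a \<notin> {1..N} \<longrightarrow> t a = 0)
               \<and> (\<forall>a \<in> {1..N}. i \<le> t a \<and> t a \<le> k)
               \<and> (\<forall>a. 1 \<le> a \<and> a < N \<longrightarrow> t a \<le> t (a+1))}"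

lemma hcomp_eq_sum_mono_words:
  "u \<ge> 0 \<Longrightarrow> hcomp u i k x = (\<Sum>t\<in>mono_words (nat u) i k. \<Prod>a = 1..nat u. x (t a))"
  unfolding hcomp_def mono_words_def by simp

lemma hcomp_neg [simp]: "u < 0 \<Longrightarrow> hcomp u i k x = 0"
  unfolding hcomp_def by simp

lemma hcomp_0 [simp]: "hcomp 0 i k x = 1"
proof -
  have "mono_words 0 i k = {\<lambda>_. 0}"
    unfolding mono_words_def by auto
  then show ?thesis
    by (simp add: hcomp_eq_sum_mono_words)
qed

lemma hcomp_empty_range: "u > 0 \<Longrightarrow> k < i \<Longrightarrow> hcomp u i k x = 0"
proof -
  assume "u > 0" "k < i"
  then have "mono_words (nat u) i k = {}"
    unfolding mono_words_def by force
  with \<open>u > 0\<close> show ?thesis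
    by (simp add: hcomp_eq_sum_mono_words)
qed

lemma finite_mono_words: "finite (mono_words N i k)"
  by (rule finite_subset[OF _ finite_funs_bounded_on[of "{1..N}" "\<lambda>_. 0" k]])
     (auto simp: mono_words_def)

lemma mono_words_le_last:
  assumes "t \<in> mono_words N i k" "a \<in> {1..N}"
  shows "t a \<le> t N"
proof -
  have "t j \<le> t (Suc j)" if "1 \<le> j" "j < N" for j
    using assms(1) that unfolding mono_words_def by simp
  with assms(2) show ?thesis
    using chain_mono_between[where a = 1 and b = N and f = t and i = a and j = N] by simp
qed

lemma mono_words_diff:
  assumes "N > 0"
  shows "mono_words N i (Suc k) - mono_words N i k = {t \<in> mono_words N i (Suc k). t N = Suc k}"
proof (intro equalityI subsetI)
  fix t assume t: "t \<in> mono_words N i (Suc k) - mono_words N i k"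
  have "t N = Suc k"
  proof (rule ccontr)
    assume "t N \<noteq> Suc k"
    moreover have "t N \<le> Suc k"
      using t assms unfolding mono_words_def by auto
    ultimately have "t a \<le> k" if "a \<in> {1..N}" for a
      using mono_words_le_last[of t N i "Suc k" a] t that by auto
    then have "t \<in> mono_words N i k"
      using t unfolding mono_words_def by auto
    with t show False
      by blast
  qed
  with t show "t \<in> {t \<in> mono_words N i (Suc k). t N = Suc k}"
    by blast
next
  fix t assume "t \<in> {t \<in> mono_words N i (Suc k). t N = Suc k}"
  moreover have "N \<in> {1..N}"
    using assms by simp
  ultimately show "t \<in> mono_words N i (Suc k) - mono_words N i k"
    unfolding mono_words_def by (metis (mono_tags, lifting) DiffI mem_Collect_eq not_less_eq_eq order_refl)
qed

lemma bij_betw_mono_words_append: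
  assumes "N > 0" "i \<le> Suc k"
  shows "bij_betw (\<lambda>s. s(N := Suc k)) (mono_words (N - 1) i (Suc k))
           {t \<in> mono_words N i (Suc k). t N = Suc k}"
proof (rule bij_betw_byWitness[where f' = "\<lambda>t. t(N := 0)"])
  show "\<forall>s\<in>mono_words (N - 1) i (Suc k). (s(N := Suc k))(N := 0) = s"
    using assms(1) by (auto simp: mono_words_def fun_eq_iff)
  show "\<forall>t\<in>{t \<in> mono_words N i (Suc k). t N = Suc k}. (t(N := 0))(N := Suc k) = t"
    by (auto simp: fun_eq_iff)
  show "(\<lambda>t. t(N := 0)) ` {t \<in> mono_words N i (Suc k). t N = Suc k} \<subseteq> mono_words (N - 1) i (Suc k)"
  proof clarify
    fix t assume "t \<in> mono_words N i (Suc k)"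
    then have "\<And>a. a \<notin> {1..N} \<Longrightarrow> t a = 0" "\<And>a. a \<in> {1..N} \<Longrightarrow> i \<le> t a \<and> t a \<le> Suc k"
      "\<And>a. 1 \<le> a \<Longrightarrow> a < N \<Longrightarrow> t a \<le> t (a+1)"
      unfolding mono_words_def by blast+
    then show "t(N := 0) \<in> mono_words (N - 1) i (Suc k)"
      unfolding mono_words_def by auto
  qed
  show "(\<lambda>s. s(N := Suc k)) ` mono_words (N - 1) i (Suc k) \<subseteq> {t \<in> mono_words N i (Suc k). t N = Suc k}"
  proof (rule image_subsetI)
    fix s assume "s \<in> mono_words (N - 1) i (Suc k)"
    then have "\<And>a. 1 \<le> a \<Longrightarrow> Suc a < N \<Longrightarrow> s a \<le> s (Suc a)"
      "\<And>a. 1 \<le> a \<Longrightarrow> a < N \<Longrightarrow> i \<le> s a \<and> s a \<le> Suc k" "\<And>a. a \<notin> {1..N} \<Longrightarrow> s a = 0"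
      unfolding mono_words_def by auto
    with assms have "s(N := Suc k) \<in> mono_words N i (Suc k)"
      unfolding mono_words_def by (auto simp del: One_nat_def) (metis Suc_eq_plus1 Suc_lessI le_SucI)
    then show "s(N := Suc k) \<in> {t \<in> mono_words N i (Suc k). t N = Suc k}"
      by simp
  qed
qed

lemma hcomp_Suc:
  assumes "i \<le> Suc k \<or> u \<noteq> 1"
  shows "hcomp u i (Suc k) x = hcomp u i k x + x (Suc k) * hcomp (u - 1) i (Suc k) x"
proof (cases "u > 0 \<and> i \<le> Suc k")
  case True
  define N where "N = nat u"
  have N: "N > 0" "nat (u - 1) = N - 1"
    using True by (auto simp: N_def)
  let ?w = "\<lambda>N t. \<Prod>a = 1..N. x (t a)"
  let ?last = "{t \<in> mono_words N i (Suc k). t N = Suc k}"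
  have "mono_words N i k \<subseteq> mono_words N i (Suc k)"
    unfolding mono_words_def by auto
  then have "sum (?w N) (mono_words N i (Suc k)) = sum (?w N) (mono_words N i k) + sum (?w N) ?last"
    using sum.subset_diff[OF _ finite_mono_words, of _ N i "Suc k" "?w N"] mono_words_diff[OF N(1)]
    by (simp add: add.commute)
  then have "hcomp u i (Suc k) x = hcomp u i k x + sum (?w N) ?last"
    using True by (simp add: hcomp_eq_sum_mono_words N_def)
  also have "sum (?w N) ?last = (\<Sum>s\<in>mono_words (N - 1) i (Suc k). ?w N (s(N := Suc k)))"
    using N True by (intro sum.reindex_bij_betw[symmetric] bij_betw_mono_words_append) auto
  also have "\<dots> = x (Suc k) * hcomp (u - 1) i (Suc k) x"
  proof -
    have "?w N (s(N := Suc k)) = x (Suc k) * ?w (N - 1) s" for s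
      using N(1) by (cases N) (auto simp: prod.cl_ivl_Suc mult.commute intro!: prod.cong)
    then show ?thesis
      using True N by (simp add: hcomp_eq_sum_mono_words sum_distrib_left)
  qed
  finally show ?thesis .
next
  case False
  then consider "u < 0" | "u = 0" | "u > 1" "Suc k < i"
    using assms by linarith
  then show ?thesis
    by cases (auto simp: hcomp_empty_range)
qed

lemma hcomp_Suc_expand:
  assumes "i \<le> Suc m"
  shows "hcomp u i (Suc m) x
       = (\<Sum>t<d. x (Suc m) ^ t * hcomp (u - int t) i m x) + x (Suc m) ^ d * hcomp (u - int d) i (Suc m) x"
proof (induction d)
  case (Suc d)
  have "x (Suc m) ^ d * hcomp (u - int d) i (Suc m) x
      = x (Suc m) ^ d * hcomp (u - int d) i m x + x (Suc m) ^ Suc d * hcomp (u - int (Suc d)) i (Suc m) x"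
    using hcomp_Suc[of i m "u - int d" x] assms by (simp add: algebra_simps)
  then show ?case
    using Suc by simp
qed simp

section \<open>Jacobi--Trudi determinants with a flag\<close>

definition jt_det :: "nat \<Rightarrow> (nat \<Rightarrow> nat) \<Rightarrow> (nat \<Rightarrow> nat) \<Rightarrow> (nat \<Rightarrow> 'a::comm_ring_1) \<Rightarrow> 'a" where
  "jt_det n \<nu> b x = det (mat n n (\<lambda>(i,j). hcomp (int (\<nu> (j+1)) - int (j+1) + int (i+1)) (i+1) (b (j+1)) x))"

lemma jt_det_cong:
  assumes "\<And>j. 1 \<le> j \<Longrightarrow> j \<le> n \<Longrightarrow> \<nu> j = \<nu>' j \<and> b j = b' j"
  shows "jt_det n \<nu> b x = jt_det n \<nu>' b' x"
  unfolding jt_det_def using assms by (intro arg_cong[where f = det] eq_matI) auto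

lemma jt_det_0 [simp]: "jt_det 0 \<nu> b x = 1"
  unfolding jt_det_def by (simp add: det_dim_zero)

lemma det_mat_hcomp_col_expand:
  fixes x :: "nat \<Rightarrow> 'a::comm_ring_1" and F :: "nat \<Rightarrow> nat \<Rightarrow> 'a"
  assumes n: "n = Suc m" and p: "p < n"
    and vanish: "det (mat n n (\<lambda>(i,j). if j = p then hcomp (c - int d + int (i+1)) (i+1) n x else F i j)) = 0"
  shows "det (mat n n (\<lambda>(i,j). if j = p then hcomp (c + int (i+1)) (i+1) n x else F i j))
       = (\<Sum>t<d. x n ^ t * det (mat n n (\<lambda>(i,j). if j = p then hcomp (c - int t + int (i+1)) (i+1) m x else F i j)))"
proof -
  define g where "g t i = (if t < d then hcomp (c + int (i+1) - int t) (i+1) m x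
                           else hcomp (c + int (i+1) - int d) (i+1) n x)" for t i
  let ?M = "\<lambda>G. mat n n (\<lambda>(i,j). if j = p then G i else F i j)"
  have col: "hcomp (c + int (i+1)) (i+1) n x = (\<Sum>t\<in>{..d}. x n ^ t * g t i)" if "i < n" for i
    using hcomp_Suc_expand[of "i+1" m "c + int (i+1)" x d] that n
    by (simp add: g_def lessThan_Suc_atMost[symmetric] algebra_simps)
  have "det (?M (\<lambda>i. hcomp (c + int (i+1)) (i+1) n x)) = det (?M (\<lambda>i. \<Sum>t\<in>{..d}. x n ^ t * g t i))"
    using col by (intro arg_cong[where f = det] eq_matI) auto
  also have "\<dots> = (\<Sum>t\<in>{..d}. x n ^ t * det (?M (g t)))"
    using p by (rule det_mat_sum_col[OF finite_atMost])
  also have "\<dots> = (\<Sum>t<d. x n ^ t * det (?M (g t))) + x n ^ d * det (?M (g d))"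
    by (simp add: lessThan_Suc_atMost[symmetric])
  also have "?M (g d) = ?M (\<lambda>i. hcomp (c - int d + int (i+1)) (i+1) n x)"
    by (intro eq_matI) (auto simp: g_def algebra_simps)
  also have "det \<dots> = 0"
    by (fact vanish)
  also have "?M (g t) = ?M (\<lambda>i. hcomp (c - int t + int (i+1)) (i+1) m x)" if "t < d" for t
    using that by (intro eq_matI) (auto simp: g_def algebra_simps)
  then have "(\<Sum>t<d. x n ^ t * det (?M (g t))) = (\<Sum>t<d. x n ^ t * det (?M (\<lambda>i. hcomp (c - int t + int (i+1)) (i+1) m x)))"
    by (intro sum.cong) auto
  finally show ?thesis
    by simp
qed

definition upper_flag :: "nat \<Rightarrow> (nat \<Rightarrow> nat) \<Rightarrow> bool" where
  "upper_flag n b \<longleftrightarrow> upper_tuple n b \<and> (\<forall>j. 1 \<le> j \<and> j < n \<longrightarrow> b j \<le> b (j+1))"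

definition row_below :: "nat \<Rightarrow> (nat \<Rightarrow> nat) \<Rightarrow> nat \<Rightarrow> nat" where
  "row_below n \<nu> j = (if j < n then \<nu> (Suc j) else 0)"

text \<open>The shapes \<open>\<mu>\<close> such that \<open>\<nu>/\<mu>\<close> is a horizontal strip lying in those of the first \<open>p\<close>
  rows whose bound is \<open>n\<close>: the possible positions of the letter \<open>n\<close> in a tableau.\<close>

definition strip_shapes :: "nat \<Rightarrow> (nat \<Rightarrow> nat) \<Rightarrow> (nat \<Rightarrow> nat) \<Rightarrow> nat \<Rightarrow> (nat \<Rightarrow> nat) set" where
  "strip_shapes n \<nu> b p = {\<mu>. (\<forall>j. 1 \<le> j \<and> j \<le> p \<and> b j = n \<longrightarrow> row_below n \<nu> j \<le> \<mu> j \<and> \<mu> j \<le> \<nu> j)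
                            \<and> (\<forall>j. \<not> (1 \<le> j \<and> j \<le> p \<and> b j = n) \<longrightarrow> \<mu> j = \<nu> j)}"

definition strip_size :: "nat \<Rightarrow> (nat \<Rightarrow> nat) \<Rightarrow> (nat \<Rightarrow> nat) \<Rightarrow> nat" where
  "strip_size n \<nu> \<mu> = (\<Sum>j=1..n. \<nu> j - \<mu> j)"

lemma strip_size_upd:
  assumes "1 \<le> q" "q \<le> n" "\<mu> q = \<nu> q" "t \<le> \<nu> q"
  shows "strip_size n \<nu> (\<mu>(q := \<nu> q - t)) = strip_size n \<nu> \<mu> + t"
proof -
  have q: "q \<in> {1..n}"
    using assms by auto
  let ?rest = "\<Sum>j\<in>{1..n}-{q}. \<nu> j - \<mu> j"
  have "strip_size n \<nu> (\<mu>(q := \<nu> q - t)) = (\<nu> q - (\<nu> q - t)) + ?rest"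
    unfolding strip_size_def by (subst sum.remove[OF _ q]) (auto intro!: sum.cong)
  moreover have "strip_size n \<nu> \<mu> = (\<nu> q - \<mu> q) + ?rest"
    unfolding strip_size_def by (subst sum.remove[OF _ q]) auto
  ultimately show ?thesis
    using assms by simp
qed

lemma strip_shapes_0: "strip_shapes n \<nu> b 0 = {\<nu>}"
  unfolding strip_shapes_def by auto

lemma strip_shapes_le: "\<mu> \<in> strip_shapes n \<nu> b p \<Longrightarrow> \<mu> i \<le> \<nu> i"
  unfolding strip_shapes_def by (cases "1 \<le> i \<and> i \<le> p \<and> b i = n") auto

lemma strip_shapes_Suc_other:
  "b (Suc p) \<noteq> n \<Longrightarrow> strip_shapes n \<nu> b (Suc p) = strip_shapes n \<nu> b p"
  unfolding strip_shapes_def by (auto simp: le_Suc_eq)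

lemma strip_shapes_outside: "\<mu> \<in> strip_shapes n \<nu> b p \<Longrightarrow> \<not> (1 \<le> i \<and> i \<le> p) \<Longrightarrow> \<mu> i = \<nu> i"
  unfolding strip_shapes_def by auto

lemma strip_shapes_other_bound:
  "\<mu> \<in> strip_shapes n \<nu> b p \<Longrightarrow> b i \<noteq> n \<Longrightarrow> \<mu> i = \<nu> i"
  unfolding strip_shapes_def by auto

lemma strip_shapes_ge_row_below:
  assumes "\<mu> \<in> strip_shapes n \<nu> b n" "is_partition n \<nu>" "1 \<le> i" "i < n"
  shows "\<nu> (Suc i) \<le> \<mu> i"
  using assms unfolding strip_shapes_def row_below_def is_partition_def
  by (cases "b i = n") auto

lemma strip_shapes_is_partition:
  assumes "\<mu> \<in> strip_shapes n \<nu> b n" "is_partition n \<nu>"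
  shows "is_partition n \<mu>"
  unfolding is_partition_def
  using strip_shapes_le[OF assms(1)] strip_shapes_ge_row_below[OF assms] by (metis Suc_eq_plus1 le_trans)

lemma finite_strip_shapes: "finite (strip_shapes n \<nu> b p)"
proof -
  let ?K = "\<Sum>i=1..p. \<nu> i"
  have "strip_shapes n \<nu> b p \<subseteq> {t. (\<forall>a. a \<notin> {1..p} \<longrightarrow> t a = \<nu> a) \<and> (\<forall>a\<in>{1..p}. t a \<le> ?K)}"
    using strip_shapes_outside strip_shapes_le member_le_sum[of _ "{1..p}" \<nu>]
    by (fastforce intro: le_trans)
  then show ?thesis
    using finite_funs_bounded_on[of "{1..p}" \<nu> ?K] finite_subset by blast
qed

lemma sum_strip_shapes_Suc:
  assumes q: "b (Suc p) = n" and below: "row_below n \<nu> (Suc p) \<le> \<nu> (Suc p)"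
  defines "D \<equiv> \<nu> (Suc p) - row_below n \<nu> (Suc p)"
  shows "(\<Sum>\<mu>\<in>strip_shapes n \<nu> b p. \<Sum>t\<le>D. G (\<mu>(Suc p := \<nu> (Suc p) - t)))
       = (\<Sum>\<mu>\<in>strip_shapes n \<nu> b (Suc p). G \<mu>)"
proof -
  let ?q = "Suc p"
  have unchanged: "\<mu> ?q = \<nu> ?q" if "\<mu> \<in> strip_shapes n \<nu> b p" for \<mu>
    using that unfolding strip_shapes_def by auto
  have "(\<Sum>\<mu>\<in>strip_shapes n \<nu> b p. \<Sum>t\<le>D. G (\<mu>(?q := \<nu> ?q - t)))
      = (\<Sum>(\<mu>,t)\<in>strip_shapes n \<nu> b p \<times> {..D}. G (\<mu>(?q := \<nu> ?q - t)))"
    by (rule sum.cartesian_product)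
  also have "\<dots> = (\<Sum>\<mu>\<in>strip_shapes n \<nu> b ?q. G \<mu>)"
  proof (rule sum.reindex_bij_witness[where i = "\<lambda>\<mu>. (\<mu>(?q := \<nu> ?q), \<nu> ?q - \<mu> ?q)"
                                          and j = "\<lambda>(\<mu>,t). \<mu>(?q := \<nu> ?q - t)"])
    fix a assume a: "a \<in> strip_shapes n \<nu> b p \<times> {..D}"
    then obtain \<mu> t where at: "a = (\<mu>, t)" "\<mu> \<in> strip_shapes n \<nu> b p" "t \<le> D"
      by auto
    then show "(\<lambda>\<mu>. (\<mu>(?q := \<nu> ?q), \<nu> ?q - \<mu> ?q)) (case a of (\<mu>, t) \<Rightarrow> \<mu>(?q := \<nu> ?q - t)) = a"
      using unchanged below by (auto simp: fun_eq_iff D_def)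
    show "(case a of (\<mu>, t) \<Rightarrow> \<mu>(?q := \<nu> ?q - t)) \<in> strip_shapes n \<nu> b ?q"
      using at below q unfolding strip_shapes_def D_def by (auto simp: le_Suc_eq)
    show "G (case a of (\<mu>, t) \<Rightarrow> \<mu>(?q := \<nu> ?q - t)) = (case a of (\<mu>, t) \<Rightarrow> G (\<mu>(?q := \<nu> ?q - t)))"
      using at by simp
  next
    fix \<mu> assume \<mu>: "\<mu> \<in> strip_shapes n \<nu> b ?q"
    then have range: "row_below n \<nu> ?q \<le> \<mu> ?q \<and> \<mu> ?q \<le> \<nu> ?q"
      using q unfolding strip_shapes_def by auto
    then show "(case (\<mu>(?q := \<nu> ?q), \<nu> ?q - \<mu> ?q) of (\<mu>, t) \<Rightarrow> \<mu>(?q := \<nu> ?q - t)) = \<mu>"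
      by (auto simp: fun_eq_iff)
    show "(\<mu>(?q := \<nu> ?q), \<nu> ?q - \<mu> ?q) \<in> strip_shapes n \<nu> b p \<times> {..D}"
      using \<mu> range unfolding strip_shapes_def D_def by (auto simp: le_Suc_eq)
  qed
  finally show ?thesis .
qed

lemma jt_det_expand_strip_row:
  fixes x :: "nat \<Rightarrow> 'a::comm_ring_1"
  assumes n: "n = Suc m" and part: "is_partition n \<nu>" and flag: "upper_flag n b"
    and q: "Suc p \<le> n" "b (Suc p) = n" and \<mu>: "\<mu> \<in> strip_shapes n \<nu> b p"
  defines "D \<equiv> \<nu> (Suc p) - row_below n \<nu> (Suc p)"
  shows "jt_det n \<mu> (\<lambda>j. if j \<le> p then min (b j) m else b j) x
       = (\<Sum>t\<le>D. x n ^ t * jt_det n (\<mu>(Suc p := \<nu> (Suc p) - t)) (\<lambda>j. if j \<le> Suc p then min (b j) m else b j) x)"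
proof -
  let ?q = "Suc p"
  let ?b = "\<lambda>j. if j \<le> p then min (b j) m else b j"
  let ?b' = "\<lambda>j. if j \<le> Suc p then min (b j) m else b j"
  have unchanged: "\<And>j. j > p \<Longrightarrow> \<mu> j = \<nu> j"
    using \<mu> unfolding strip_shapes_def by auto
  have below: "row_below n \<nu> ?q \<le> \<nu> ?q"
    using part q unfolding row_below_def is_partition_def by auto
  define F where "F i j = hcomp (int (\<mu> (j+1)) - int (j+1) + int (i+1)) (i+1) (?b (j+1)) x" for i j
  define c where "c = int (\<nu> ?q) - int ?q"
  have "jt_det n \<mu> ?b x = det (mat n n (\<lambda>(i,j). if j = p then hcomp (c + int (i+1)) (i+1) n x else F i j))"
    unfolding jt_det_def by (intro arg_cong[where f = det] eq_matI) (auto simp: F_def c_def unchanged q)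
  also have "\<dots> = (\<Sum>t<Suc D. x n ^ t * det (mat n n (\<lambda>(i,j).
                    if j = p then hcomp (c - int t + int (i+1)) (i+1) m x else F i j)))"
  proof (rule det_mat_hcomp_col_expand[OF n])
    show "p < n"
      using q by simp
    show "det (mat n n (\<lambda>(i,j). if j = p then hcomp (c - int (Suc D) + int (i+1)) (i+1) n x else F i j)) = 0"
    proof (cases "?q < n")
      case True
      text \<open>The expanded column has become a copy of its right neighbour, which has bound \<open>n\<close> too.\<close>
      have "b ?q \<le> b (Suc ?q)" "b (Suc ?q) \<le> n"
        using flag True unfolding upper_flag_def upper_tuple_def by auto
      then have "b (Suc ?q) = n"
        using q by simp
      moreover have shift: "c - int (Suc D) + int (i+1) = int (\<nu> (Suc p + 1)) - int (Suc p + 1) + int (i+1)" for i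
        using True below unfolding c_def D_def row_below_def by auto
      ultimately have "hcomp (c - int (Suc D) + int (i+1)) (i+1) n x = F i (Suc p)" for i
        unfolding F_def shift using unchanged[of "Suc ?q"] by simp
      then show ?thesis
        using True by (intro det_mat_identical_cols[of p n "Suc p"]) auto
    next
      case False
      then have "c - int (Suc D) = - int n - 1"
        using q unfolding c_def D_def row_below_def by auto
      then show ?thesis
        using q by (intro det_mat_zero_col[of p n]) auto
    qed
  qed
  also have "\<dots> = (\<Sum>t\<le>D. x n ^ t * jt_det n (\<mu>(?q := \<nu> ?q - t)) ?b' x)"
    unfolding lessThan_Suc_atMost
  proof (intro sum.cong refl arg_cong[where f = "\<lambda>z. _ * z"])
    fix t assume "t \<in> {..D}"
    then have "t \<le> \<nu> ?q"
      unfolding D_def by simp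
    then show "det (mat n n (\<lambda>(i,j). if j = p then hcomp (c - int t + int (i+1)) (i+1) m x else F i j))
        = jt_det n (\<mu>(?q := \<nu> ?q - t)) ?b' x"
      unfolding jt_det_def
      by (intro arg_cong[where f = det] eq_matI) (auto simp: F_def c_def q n of_nat_diff algebra_simps)
  qed
  finally show ?thesis .
qed

lemma jt_det_pieri:
  fixes x :: "nat \<Rightarrow> 'a::comm_ring_1"
  assumes n: "n = Suc m" and part: "is_partition n \<nu>" and flag: "upper_flag n b"
  shows "p \<le> n \<Longrightarrow> jt_det n \<nu> b x
     = (\<Sum>\<mu>\<in>strip_shapes n \<nu> b p. x n ^ strip_size n \<nu> \<mu> * jt_det n \<mu> (\<lambda>j. if j \<le> p then min (b j) m else b j) x)"
proof (induction p)
  case 0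
  show ?case
    unfolding strip_shapes_0 strip_size_def by (simp, intro jt_det_cong) auto
next
  case (Suc p)
  let ?q = "Suc p"
  let ?b = "\<lambda>j. if j \<le> p then min (b j) m else b j"
  let ?b' = "\<lambda>j. if j \<le> Suc p then min (b j) m else b j"
  let ?S = "strip_shapes n \<nu> b"
  have IH: "jt_det n \<nu> b x = (\<Sum>\<mu>\<in>?S p. x n ^ strip_size n \<nu> \<mu> * jt_det n \<mu> ?b x)"
    using Suc by simp
  show ?case
  proof (cases "b ?q = n")
    case False
    then have "b ?q \<le> m"
      using flag Suc.prems n unfolding upper_flag_def upper_tuple_def by force
    then have "jt_det n \<mu> ?b x = jt_det n \<mu> ?b' x" for \<mu>
      by (intro jt_det_cong) (auto simp: le_Suc_eq)
    then show ?thesis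
      unfolding IH strip_shapes_Suc_other[of b p n, OF False] by simp
  next
    case True
    define D where "D = \<nu> ?q - row_below n \<nu> ?q"
    have below: "row_below n \<nu> ?q \<le> \<nu> ?q"
      using part Suc.prems unfolding row_below_def is_partition_def by auto
    let ?G = "\<lambda>\<mu>. x n ^ strip_size n \<nu> \<mu> * jt_det n \<mu> ?b' x"
    have "x n ^ strip_size n \<nu> \<mu> * jt_det n \<mu> ?b x = (\<Sum>t\<le>D. ?G (\<mu>(?q := \<nu> ?q - t)))"
      if \<mu>: "\<mu> \<in> ?S p" for \<mu>
    proof -
      have "\<mu> ?q = \<nu> ?q"
        using \<mu> unfolding strip_shapes_def by auto
      then have "strip_size n \<nu> (\<mu>(?q := \<nu> ?q - t)) = strip_size n \<nu> \<mu> + t" if "t \<le> D" for t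
        using that Suc.prems by (intro strip_size_upd) (auto simp: D_def)
      then show ?thesis
        unfolding jt_det_expand_strip_row[OF n part flag Suc.prems True \<mu>, folded D_def]
        by (simp add: sum_distrib_left power_add ac_simps)
    qed
    then have "jt_det n \<nu> b x = (\<Sum>\<mu>\<in>?S p. \<Sum>t\<le>D. ?G (\<mu>(?q := \<nu> ?q - t)))"
      unfolding IH by (rule sum.cong[OF refl])
    also have "\<dots> = (\<Sum>\<mu>\<in>?S ?q. ?G \<mu>)"
      unfolding D_def using True below by (rule sum_strip_shapes_Suc[where b = b and p = p])
    finally show ?thesis .
  qed
qed

section \<open>Semistandard tableaux\<close>

lemma SSYT_outside: "T \<in> SSYT n \<nu> \<Longrightarrow> \<not> in_shape n \<nu> i j \<Longrightarrow> T i j = 0"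
  unfolding SSYT_def by blast

lemma SSYT_range: "T \<in> SSYT n \<nu> \<Longrightarrow> in_shape n \<nu> i j \<Longrightarrow> 1 \<le> T i j \<and> T i j \<le> n"
  unfolding SSYT_def by blast

lemma SSYT_row: "T \<in> SSYT n \<nu> \<Longrightarrow> in_shape n \<nu> i j \<Longrightarrow> in_shape n \<nu> i (j+1) \<Longrightarrow> T i j \<le> T i (j+1)"
  unfolding SSYT_def by blast

lemma SSYT_col: "T \<in> SSYT n \<nu> \<Longrightarrow> in_shape n \<nu> i j \<Longrightarrow> in_shape n \<nu> (i+1) j \<Longrightarrow> T i j < T (i+1) j"
  unfolding SSYT_def by blast

lemma SSYT_le: "T \<in> SSYT n \<nu> \<Longrightarrow> T i j \<le> n"
  unfolding SSYT_def by (cases "in_shape n \<nu> i j") auto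

lemma SSYTI:
  assumes "\<And>i j. \<not> in_shape n \<nu> i j \<Longrightarrow> T i j = 0"
    "\<And>i j. in_shape n \<nu> i j \<Longrightarrow> 1 \<le> T i j \<and> T i j \<le> n"
    "\<And>i j. in_shape n \<nu> i j \<Longrightarrow> in_shape n \<nu> i (j+1) \<Longrightarrow> T i j \<le> T i (j+1)"
    "\<And>i j. in_shape n \<nu> i j \<Longrightarrow> in_shape n \<nu> (i+1) j \<Longrightarrow> T i j < T (i+1) j"
  shows "T \<in> SSYT n \<nu>"
  unfolding SSYT_def using assms by blast

lemma SSYT_row_mono:
  assumes T: "T \<in> SSYT n \<nu>" and i: "1 \<le> i" "i \<le> n" and j: "1 \<le> j" "j \<le> j'" "j' \<le> \<nu> i"
  shows "T i j \<le> T i j'"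
proof -
  have "T i k \<le> T i (Suc k)" if "1 \<le> k" "k < \<nu> i" for k
    using SSYT_row[OF T, of i k] i that unfolding in_shape_def by simp
  with j show ?thesis
    using chain_mono_between[where a = 1 and b = "\<nu> i" and f = "T i"] by blast
qed

lemma in_shape_row_above:
  assumes "is_partition n \<nu>" "in_shape n \<nu> (Suc i) j" "1 \<le> i"
  shows "in_shape n \<nu> i j"
  using assms unfolding in_shape_def is_partition_def by (auto intro: le_trans)

lemma SSYT_col_chain:
  assumes T: "T \<in> SSYT n \<nu>" and part: "is_partition n \<nu>" and i: "1 \<le> i"
  shows "i \<le> k \<Longrightarrow> k \<le> n \<Longrightarrow> 1 \<le> c \<Longrightarrow> c \<le> \<nu> k \<Longrightarrow> T i c + (k - i) \<le> T k c"
proof (induction k)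
  case (Suc k)
  show ?case
  proof (cases "i = Suc k")
    case False
    then have ik: "i \<le> k"
      using Suc.prems by simp
    have below: "in_shape n \<nu> (Suc k) c"
      using Suc.prems unfolding in_shape_def by auto
    then have above: "in_shape n \<nu> k c"
      using in_shape_row_above[OF part] ik i by simp
    then have "T i c + (k - i) \<le> T k c"
      using Suc.IH ik Suc.prems unfolding in_shape_def by auto
    moreover have "T k c < T (Suc k) c"
      using SSYT_col[OF T above] below by simp
    ultimately show ?thesis
      using ik by simp
  qed simp
qed simp

lemma SSYT_ge_row:
  assumes T: "T \<in> SSYT n \<nu>" and part: "is_partition n \<nu>"
  shows "in_shape n \<nu> i j \<Longrightarrow> i \<le> T i j"
proof (induction i)
  case (Suc i)
  show ?case
  proof (cases "i = 0")
    case True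
    then show ?thesis
      using SSYT_range[OF T Suc.prems] by simp
  next
    case False
    then have above: "in_shape n \<nu> i j"
      using in_shape_row_above[OF part Suc.prems] by simp
    then have "i \<le> T i j"
      by (rule Suc.IH)
    also have "T i j < T (Suc i) j"
      using SSYT_col[OF T above] Suc.prems by simp
    finally show ?thesis
      by simp
  qed
qed simp

lemma finite_SSYT: "finite (SSYT n \<nu>)"
proof -
  let ?K = "\<Sum>i=1..n. \<nu> i"
  let ?A = "{1..n} \<times> {1..?K}"
  have shape: "(i, j) \<in> ?A" if "in_shape n \<nu> i j" for i j
    using that member_le_sum[of i "{1..n}" \<nu>] unfolding in_shape_def by auto
  have "SSYT n \<nu> \<subseteq> curry ` {f. (\<forall>a. a \<notin> ?A \<longrightarrow> f a = 0) \<and> (\<forall>a\<in>?A. f a \<le> n)}"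
  proof
    fix T assume T: "T \<in> SSYT n \<nu>"
    have "\<forall>a. a \<notin> ?A \<longrightarrow> case_prod T a = 0"
      using SSYT_outside[OF T] shape by auto
    then show "T \<in> curry ` {f. (\<forall>a. a \<notin> ?A \<longrightarrow> f a = 0) \<and> (\<forall>a\<in>?A. f a \<le> n)}"
      using SSYT_le[OF T] by (intro image_eqI[where x = "case_prod T"]) auto
  qed
  then show ?thesis
    using finite_funs_bounded_on[of ?A "\<lambda>_. 0" n] finite_subset by blast
qed

definition bounded_SSYT :: "nat \<Rightarrow> (nat \<Rightarrow> nat) \<Rightarrow> (nat \<Rightarrow> nat) \<Rightarrow> (nat \<Rightarrow> nat \<Rightarrow> nat) set" where
  "bounded_SSYT n \<nu> b = {T \<in> SSYT n \<nu>. \<forall>i j. in_shape n \<nu> i j \<longrightarrow> T i j \<le> b i}"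

lemma row_bound_sum_eq:
  "row_bound_sum n \<nu> b x = (\<Sum>T\<in>bounded_SSYT n \<nu> b. \<Prod>k = 1..n. x k ^ theta n \<nu> T k)"
  unfolding row_bound_sum_def bounded_SSYT_def by simp

lemma row_bound_sum_0 [simp]: "row_bound_sum 0 \<nu> b x = 1"
proof -
  have "bounded_SSYT 0 \<nu> b = {\<lambda>i j. 0}"
    unfolding bounded_SSYT_def SSYT_def in_shape_def by auto
  then show ?thesis
    unfolding row_bound_sum_eq by simp
qed

section \<open>Removing the largest letter from a tableau\<close>

lemma downclosed_eq_atLeastAtMost_card:
  assumes "finite S" "\<forall>j\<in>S. 1 \<le> j" "\<forall>j\<in>S. \<forall>j'. 1 \<le> j' \<and> j' \<le> j \<longrightarrow> j' \<in> S"
  shows "S = {1..card S}"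
proof (cases "S = {}")
  case False
  then have "Max S \<in> S"
    using assms(1) by simp
  have "S = {1..Max S}"
  proof (intro equalityI subsetI)
    fix j assume "j \<in> S"
    then show "j \<in> {1..Max S}"
      using assms(1,2) by simp
  next
    fix j assume "j \<in> {1..Max S}"
    then show "j \<in> S"
      using assms(3) \<open>Max S \<in> S\<close> by simp
  qed
  then show ?thesis
    by (metis card_atLeastAtMost diff_Suc_1)
qed simp

definition small_cols :: "nat \<Rightarrow> (nat \<Rightarrow> nat) \<Rightarrow> (nat \<Rightarrow> nat \<Rightarrow> nat) \<Rightarrow> nat \<Rightarrow> nat set" where
  "small_cols n \<nu> T i = {j \<in> {1..\<nu> i}. T i j < n}"

definition lower_shape :: "nat \<Rightarrow> (nat \<Rightarrow> nat) \<Rightarrow> (nat \<Rightarrow> nat \<Rightarrow> nat) \<Rightarrow> nat \<Rightarrow> nat" where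
  "lower_shape n \<nu> T i = (if 1 \<le> i \<and> i \<le> n then card (small_cols n \<nu> T i) else \<nu> i)"

definition restrict_tableau :: "nat \<Rightarrow> (nat \<Rightarrow> nat) \<Rightarrow> (nat \<Rightarrow> nat \<Rightarrow> nat) \<Rightarrow> nat \<Rightarrow> nat \<Rightarrow> nat" where
  "restrict_tableau m \<mu> T = (\<lambda>i j. if in_shape m \<mu> i j then T i j else 0)"

definition extend_tableau ::
    "nat \<Rightarrow> nat \<Rightarrow> (nat \<Rightarrow> nat) \<Rightarrow> (nat \<Rightarrow> nat) \<Rightarrow> (nat \<Rightarrow> nat \<Rightarrow> nat) \<Rightarrow> nat \<Rightarrow> nat \<Rightarrow> nat" where
  "extend_tableau n m \<nu> \<mu> T' =
     (\<lambda>i j. if in_shape m \<mu> i j then T' i j else if in_shape n \<nu> i j then n else 0)"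

lemma small_cols_eq:
  assumes T: "T \<in> SSYT n \<nu>" and i: "1 \<le> i" "i \<le> n"
  shows "small_cols n \<nu> T i = {1..card (small_cols n \<nu> T i)}"
proof (rule downclosed_eq_atLeastAtMost_card)
  show "\<forall>j\<in>small_cols n \<nu> T i. \<forall>j'. 1 \<le> j' \<and> j' \<le> j \<longrightarrow> j' \<in> small_cols n \<nu> T i"
    unfolding small_cols_def using SSYT_row_mono[OF T i] by fastforce
qed (auto simp: small_cols_def)

lemma lower_shape_iff:
  assumes T: "T \<in> SSYT n \<nu>" and i: "1 \<le> i" "i \<le> n" and j: "1 \<le> j" "j \<le> \<nu> i"
  shows "T i j < n \<longleftrightarrow> j \<le> lower_shape n \<nu> T i"
proof -
  have "T i j < n \<longleftrightarrow> j \<in> small_cols n \<nu> T i"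
    using j unfolding small_cols_def by auto
  also have "\<dots> \<longleftrightarrow> j \<le> lower_shape n \<nu> T i"
    using small_cols_eq[OF T i] i j unfolding lower_shape_def by (metis atLeastAtMost_iff)
  finally show ?thesis .
qed

lemma lower_shape_le: "lower_shape n \<nu> T i \<le> \<nu> i"
proof -
  have "card (small_cols n \<nu> T i) \<le> card {1..\<nu> i}"
    unfolding small_cols_def by (intro card_mono) auto
  then show ?thesis
    unfolding lower_shape_def by simp
qed

lemma in_shape_mono:
  "(\<And>i. \<mu> i \<le> \<nu> i) \<Longrightarrow> m \<le> n \<Longrightarrow> in_shape m \<mu> i j \<Longrightarrow> in_shape n \<nu> i j"
  unfolding in_shape_def by (auto intro: le_trans)

context
  fixes n m :: nat and \<nu> b :: "nat \<Rightarrow> nat"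
  assumes n: "n = Suc m" and part: "is_partition n \<nu>" and bound: "upper_tuple n b"
begin

lemma lower_shape_last: "T \<in> SSYT n \<nu> \<Longrightarrow> lower_shape n \<nu> T n = 0"
  using SSYT_ge_row[OF _ part, of T n] n
  unfolding lower_shape_def small_cols_def in_shape_def by fastforce

lemma lower_shape_in_strip_shapes:
  assumes T: "T \<in> bounded_SSYT n \<nu> b"
  shows "lower_shape n \<nu> T \<in> strip_shapes n \<nu> b n"
proof -
  have TS: "T \<in> SSYT n \<nu>"
    using T unfolding bounded_SSYT_def by simp
  let ?\<mu> = "lower_shape n \<nu> T"
  have "row_below n \<nu> j \<le> ?\<mu> j" if j: "1 \<le> j" "j < n" for j
  proof (cases "\<nu> (Suc j) = 0")
    case False
    let ?c = "\<nu> (Suc j)"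
    have below: "in_shape n \<nu> (Suc j) ?c"
      using j False unfolding in_shape_def by auto
    then have above: "in_shape n \<nu> j ?c"
      using in_shape_row_above[OF part] j by simp
    have "T j ?c < T (Suc j) ?c"
      using SSYT_col[OF TS above] below by simp
    also have "T (Suc j) ?c \<le> n"
      by (rule SSYT_le[OF TS])
    finally show ?thesis
      using lower_shape_iff[OF TS, of j ?c] j above unfolding in_shape_def row_below_def by auto
  qed (simp add: row_below_def)
  then have strip: "row_below n \<nu> j \<le> ?\<mu> j \<and> ?\<mu> j \<le> \<nu> j" if "1 \<le> j" "j \<le> n" for j
    using that lower_shape_le[of n \<nu> T j] by (cases "j < n") (auto simp: row_below_def)
  have "?\<mu> j = \<nu> j" if j: "\<not> (1 \<le> j \<and> j \<le> n \<and> b j = n)" for j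
  proof (cases "1 \<le> j \<and> j \<le> n")
    case True
    then have "b j < n"
      using j bound unfolding upper_tuple_def by force
    have "\<nu> j \<le> ?\<mu> j"
    proof (cases "\<nu> j = 0")
      case False
      then have "in_shape n \<nu> j (\<nu> j)"
        using True unfolding in_shape_def by auto
      then have "T j (\<nu> j) < n"
        using T \<open>b j < n\<close> unfolding bounded_SSYT_def by fastforce
      then show ?thesis
        using lower_shape_iff[OF TS, of j "\<nu> j"] True False by auto
    qed simp
    then show ?thesis
      using lower_shape_le[of n \<nu> T j] by simp
  qed (auto simp: lower_shape_def)
  with strip show ?thesis
    unfolding strip_shapes_def by blast
qed

lemma restrict_tableau_bounded:
  assumes T: "T \<in> bounded_SSYT n \<nu> b"
  shows "restrict_tableau m (lower_shape n \<nu> T) T \<in> bounded_SSYT m (lower_shape n \<nu> T) (\<lambda>j. min (b j) m)"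
proof -
  let ?\<mu> = "lower_shape n \<nu> T"
  let ?T' = "restrict_tableau m ?\<mu> T"
  have TS: "T \<in> SSYT n \<nu>"
    using T unfolding bounded_SSYT_def by simp
  have sub: "in_shape n \<nu> i j" if "in_shape m ?\<mu> i j" for i j
    using in_shape_mono[OF lower_shape_le, of m n] that n by simp
  have small: "T i j < n" if "in_shape m ?\<mu> i j" for i j
    using that lower_shape_iff[OF TS, of i j] n lower_shape_le[of n \<nu> T i]
    unfolding in_shape_def by auto
  have "?T' \<in> SSYT m ?\<mu>"
  proof (rule SSYTI)
    fix i j
    show "\<not> in_shape m ?\<mu> i j \<Longrightarrow> ?T' i j = 0"
      unfolding restrict_tableau_def by simp
    show "in_shape m ?\<mu> i j \<Longrightarrow> 1 \<le> ?T' i j \<and> ?T' i j \<le> m"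
      using SSYT_range[OF TS sub] small n unfolding restrict_tableau_def by fastforce
    show "in_shape m ?\<mu> i j \<Longrightarrow> in_shape m ?\<mu> i (j+1) \<Longrightarrow> ?T' i j \<le> ?T' i (j+1)"
      using SSYT_row[OF TS sub sub] unfolding restrict_tableau_def by simp
    show "in_shape m ?\<mu> i j \<Longrightarrow> in_shape m ?\<mu> (i+1) j \<Longrightarrow> ?T' i j < ?T' (i+1) j"
      using SSYT_col[OF TS sub sub] unfolding restrict_tableau_def by simp
  qed
  moreover have "?T' i j \<le> min (b i) m" if "in_shape m ?\<mu> i j" for i j
    using T sub[OF that] small[OF that] that n
    unfolding bounded_SSYT_def restrict_tableau_def by fastforce
  ultimately show ?thesis
    unfolding bounded_SSYT_def by blast
qed

lemma extend_restrict_tableau: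
  assumes T: "T \<in> bounded_SSYT n \<nu> b"
  shows "extend_tableau n m \<nu> (lower_shape n \<nu> T) (restrict_tableau m (lower_shape n \<nu> T) T) = T"
proof (intro ext)
  fix i j
  let ?\<mu> = "lower_shape n \<nu> T"
  have TS: "T \<in> SSYT n \<nu>"
    using T unfolding bounded_SSYT_def by simp
  have "T i j = n" if "in_shape n \<nu> i j" "\<not> in_shape m ?\<mu> i j"
  proof -
    have "n \<le> T i j"
    proof (cases "i = n")
      case True
      then show ?thesis
        using SSYT_ge_row[OF TS part] that(1) by blast
    next
      case False
      then have "\<not> j \<le> ?\<mu> i" "1 \<le> i" "i \<le> n" "1 \<le> j" "j \<le> \<nu> i"
        using that n unfolding in_shape_def by auto
      then show ?thesis
        using lower_shape_iff[OF TS] by (meson not_less)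
    qed
    then show ?thesis
      using SSYT_le[OF TS, of i j] by simp
  qed
  then show "extend_tableau n m \<nu> ?\<mu> (restrict_tableau m ?\<mu> T) i j = T i j"
    using SSYT_outside[OF TS] unfolding extend_tableau_def restrict_tableau_def by auto
qed

lemma extend_tableau_inverse:
  assumes \<mu>: "\<mu> \<in> strip_shapes n \<nu> b n" "\<mu> n = 0"
    and T': "T' \<in> bounded_SSYT m \<mu> (\<lambda>j. min (b j) m)"
  shows "lower_shape n \<nu> (extend_tableau n m \<nu> \<mu> T') = \<mu>"
    and "restrict_tableau m \<mu> (extend_tableau n m \<nu> \<mu> T') = T'"
proof -
  have TS: "T' \<in> SSYT m \<mu>"
    using T' unfolding bounded_SSYT_def by simp
  let ?E = "extend_tableau n m \<nu> \<mu> T'"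
  have "small_cols n \<nu> ?E i = {1..\<mu> i}" if i: "1 \<le> i" "i \<le> m" for i
  proof (intro equalityI subsetI)
    fix j assume "j \<in> small_cols n \<nu> ?E i"
    then have "1 \<le> j" "j \<le> \<nu> i" "?E i j < n"
      unfolding small_cols_def by auto
    then have "in_shape m \<mu> i j"
      using i n unfolding extend_tableau_def in_shape_def by (auto split: if_splits)
    then show "j \<in> {1..\<mu> i}"
      unfolding in_shape_def by auto
  next
    fix j assume j: "j \<in> {1..\<mu> i}"
    then have "in_shape m \<mu> i j"
      using i unfolding in_shape_def by auto
    then have "?E i j \<le> m"
      using SSYT_range[OF TS] unfolding extend_tableau_def by simp
    then show "j \<in> small_cols n \<nu> ?E i"
      using j strip_shapes_le[OF \<mu>(1), of i] n unfolding small_cols_def by auto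
  qed
  moreover have "small_cols n \<nu> ?E n = {}"
    using n unfolding small_cols_def extend_tableau_def in_shape_def by auto
  ultimately show "lower_shape n \<nu> ?E = \<mu>"
    using \<mu> strip_shapes_outside[OF \<mu>(1)] n unfolding lower_shape_def
    by (auto simp: fun_eq_iff le_Suc_eq)
  show "restrict_tableau m \<mu> ?E = T'"
    using SSYT_outside[OF TS] unfolding restrict_tableau_def extend_tableau_def by (auto simp: fun_eq_iff)
qed

lemma extend_tableau_SSYT:
  assumes \<mu>: "\<mu> \<in> strip_shapes n \<nu> b n" and TS: "T' \<in> SSYT m \<mu>"
  shows "extend_tableau n m \<nu> \<mu> T' \<in> SSYT n \<nu>"
proof (rule SSYTI)
  let ?E = "extend_tableau n m \<nu> \<mu> T'"
  have sub: "in_shape n \<nu> i j" if "in_shape m \<mu> i j" for i j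
    using in_shape_mono[OF strip_shapes_le[OF \<mu>], of m n] that n by simp
  have T'm: "1 \<le> T' i j \<and> T' i j \<le> m" if "in_shape m \<mu> i j" for i j
    using SSYT_range[OF TS that] .
  fix i j
  show "\<not> in_shape n \<nu> i j \<Longrightarrow> ?E i j = 0"
    using sub unfolding extend_tableau_def by auto
  show "in_shape n \<nu> i j \<Longrightarrow> 1 \<le> ?E i j \<and> ?E i j \<le> n"
    using T'm n unfolding extend_tableau_def by force
  show "?E i j \<le> ?E i (j+1)" if "in_shape n \<nu> i j" "in_shape n \<nu> i (j+1)"
  proof (cases "in_shape m \<mu> i (j+1)")
    case True
    then have "in_shape m \<mu> i j"
      using that unfolding in_shape_def by auto
    with True show ?thesis
      using SSYT_row[OF TS] unfolding extend_tableau_def by simp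
  next
    case False
    then show ?thesis
      using that T'm n unfolding extend_tableau_def by force
  qed
  show "?E i j < ?E (i+1) j" if "in_shape n \<nu> i j" "in_shape n \<nu> (i+1) j"
  proof (cases "in_shape m \<mu> i j")
    case True
    then show ?thesis
      using that T'm n SSYT_col[OF TS True] unfolding extend_tableau_def by force
  next
    case False
    text \<open>\<open>\<nu>/\<mu>\<close> is a horizontal strip, so no cell of \<open>\<nu>\<close> lies below a cell outside \<open>\<mu>\<close>.\<close>
    have "1 \<le> i" "i < n"
      using that unfolding in_shape_def by auto
    then have "\<nu> (Suc i) \<le> \<mu> i"
      using strip_shapes_ge_row_below[OF \<mu> part] by blast
    then have "in_shape m \<mu> i j"
      using that \<open>1 \<le> i\<close> \<open>i < n\<close> n unfolding in_shape_def by auto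
    with False show ?thesis
      by simp
  qed
qed

lemma extend_tableau_bounded:
  assumes \<mu>: "\<mu> \<in> strip_shapes n \<nu> b n" and T': "T' \<in> bounded_SSYT m \<mu> (\<lambda>j. min (b j) m)"
  shows "extend_tableau n m \<nu> \<mu> T' \<in> bounded_SSYT n \<nu> b"
proof -
  have TS: "T' \<in> SSYT m \<mu>"
    using T' unfolding bounded_SSYT_def by simp
  have "extend_tableau n m \<nu> \<mu> T' i j \<le> b i" if s: "in_shape n \<nu> i j" for i j
  proof (cases "in_shape m \<mu> i j")
    case True
    then show ?thesis
      using T' unfolding bounded_SSYT_def extend_tableau_def by fastforce
  next
    case False
    have i: "1 \<le> i" "i \<le> n"
      using s unfolding in_shape_def by auto
    have "b i = n"
    proof (rule ccontr)
      assume "b i \<noteq> n"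
      then have "\<mu> i = \<nu> i" "i \<noteq> n"
        using strip_shapes_other_bound[OF \<mu>] bound i unfolding upper_tuple_def by force+
      then have "in_shape m \<mu> i j"
        using s i n unfolding in_shape_def by auto
      with False show False
        by simp
    qed
    with False s show ?thesis
      unfolding extend_tableau_def by simp
  qed
  then show ?thesis
    using extend_tableau_SSYT[OF \<mu> TS] unfolding bounded_SSYT_def by blast
qed

lemma theta_lower_shape:
  assumes TS: "T \<in> SSYT n \<nu>" and k: "1 \<le> k" "k \<le> m"
  shows "theta n \<nu> T k = theta m (lower_shape n \<nu> T) (restrict_tableau m (lower_shape n \<nu> T) T) k"
proof -
  let ?\<mu> = "lower_shape n \<nu> T"
  have "in_shape n \<nu> i j \<and> T i j = k \<longleftrightarrow> in_shape m ?\<mu> i j \<and> restrict_tableau m ?\<mu> T i j = k" for i j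
  proof
    assume a: "in_shape n \<nu> i j \<and> T i j = k"
    then have "i \<noteq> n"
      using SSYT_ge_row[OF TS part, of i j] k n by auto
    then have "1 \<le> i" "i \<le> m" "i \<le> n" "1 \<le> j" "j \<le> \<nu> i"
      using a n unfolding in_shape_def by auto
    moreover have "T i j < n"
      using a k n by simp
    ultimately have "in_shape m ?\<mu> i j"
      using lower_shape_iff[OF TS] unfolding in_shape_def by blast
    with a show "in_shape m ?\<mu> i j \<and> restrict_tableau m ?\<mu> T i j = k"
      unfolding restrict_tableau_def by simp
  next
    assume "in_shape m ?\<mu> i j \<and> restrict_tableau m ?\<mu> T i j = k"
    then show "in_shape n \<nu> i j \<and> T i j = k"
      using in_shape_mono[OF lower_shape_le, of m n] n unfolding restrict_tableau_def by auto
  qed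
  then show ?thesis
    unfolding theta_def by simp
qed

lemma theta_last_letter:
  assumes TS: "T \<in> SSYT n \<nu>"
  shows "theta n \<nu> T n = strip_size n \<nu> (lower_shape n \<nu> T)"
proof -
  let ?\<mu> = "lower_shape n \<nu> T"
  have "in_shape n \<nu> i j \<and> T i j = n \<longleftrightarrow> i \<in> {1..n} \<and> j \<in> {?\<mu> i + 1..\<nu> i}" for i j
    using lower_shape_iff[OF TS, of i j] SSYT_le[OF TS, of i j] unfolding in_shape_def
    by (auto simp: not_le)
  then have "theta n \<nu> T n = card (Sigma {1..n} (\<lambda>i. {?\<mu> i + 1..\<nu> i}))"
    unfolding theta_def by (intro arg_cong[where f = card]) auto
  also have "\<dots> = strip_size n \<nu> ?\<mu>"
    unfolding strip_size_def by (subst card_SigmaI) auto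
  finally show ?thesis .
qed

lemma monomial_remove_last_letter:
  fixes x :: "nat \<Rightarrow> 'a::comm_ring_1"
  assumes TS: "T \<in> SSYT n \<nu>"
  shows "(\<Prod>k = 1..n. x k ^ theta n \<nu> T k)
       = x n ^ strip_size n \<nu> (lower_shape n \<nu> T)
         * (\<Prod>k = 1..m. x k ^ theta m (lower_shape n \<nu> T) (restrict_tableau m (lower_shape n \<nu> T) T) k)"
proof -
  have "(\<Prod>k = 1..n. x k ^ theta n \<nu> T k) = (\<Prod>k = 1..m. x k ^ theta n \<nu> T k) * x n ^ theta n \<nu> T n"
    using n by (simp add: prod.cl_ivl_Suc)
  then show ?thesis
    using theta_lower_shape[OF TS] theta_last_letter[OF TS] by (simp add: mult.commute)
qed

lemma row_bound_sum_remove_last_letter: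
  fixes x :: "nat \<Rightarrow> 'a::comm_ring_1"
  shows "row_bound_sum n \<nu> b x
       = (\<Sum>\<mu>\<in>{\<mu> \<in> strip_shapes n \<nu> b n. \<mu> n = 0}.
            x n ^ strip_size n \<nu> \<mu> * row_bound_sum m \<mu> (\<lambda>j. min (b j) m) x)"
proof -
  let ?P = "{\<mu> \<in> strip_shapes n \<nu> b n. \<mu> n = 0}"
  let ?S' = "\<lambda>\<mu>. bounded_SSYT m \<mu> (\<lambda>j. min (b j) m)"
  let ?W = "\<lambda>k \<mu> T. \<Prod>i = 1..k. x i ^ theta k \<mu> T i"
  have "(\<Sum>\<mu>\<in>?P. x n ^ strip_size n \<nu> \<mu> * row_bound_sum m \<mu> (\<lambda>j. min (b j) m) x)
      = (\<Sum>\<mu>\<in>?P. \<Sum>T'\<in>?S' \<mu>. x n ^ strip_size n \<nu> \<mu> * ?W m \<mu> T')"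
    unfolding row_bound_sum_eq by (simp add: sum_distrib_left)
  also have "\<dots> = (\<Sum>(\<mu>,T')\<in>Sigma ?P ?S'. x n ^ strip_size n \<nu> \<mu> * ?W m \<mu> T')"
    using finite_strip_shapes finite_SSYT unfolding bounded_SSYT_def by (intro sum.Sigma) auto
  also have "\<dots> = (\<Sum>T\<in>bounded_SSYT n \<nu> b. ?W n \<nu> T)"
  proof (rule sum.reindex_bij_witness[where i = "\<lambda>T. (lower_shape n \<nu> T, restrict_tableau m (lower_shape n \<nu> T) T)"
                                          and j = "\<lambda>(\<mu>,T'). extend_tableau n m \<nu> \<mu> T'"])
    fix a assume "a \<in> Sigma ?P ?S'"
    then obtain \<mu> T' where a: "a = (\<mu>, T')" "\<mu> \<in> strip_shapes n \<nu> b n" "\<mu> n = 0" "T' \<in> ?S' \<mu>"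
      by auto
    note inv = extend_tableau_inverse[OF a(2,3,4)]
    have ext: "extend_tableau n m \<nu> \<mu> T' \<in> bounded_SSYT n \<nu> b"
      by (rule extend_tableau_bounded[OF a(2,4)])
    then show "(case a of (\<mu>, T') \<Rightarrow> extend_tableau n m \<nu> \<mu> T') \<in> bounded_SSYT n \<nu> b"
      using a by simp
    show "(lower_shape n \<nu> (case a of (\<mu>, T') \<Rightarrow> extend_tableau n m \<nu> \<mu> T'),
           restrict_tableau m (lower_shape n \<nu> (case a of (\<mu>, T') \<Rightarrow> extend_tableau n m \<nu> \<mu> T'))
             (case a of (\<mu>, T') \<Rightarrow> extend_tableau n m \<nu> \<mu> T')) = a"
      using inv a by simp
    show "?W n \<nu> (case a of (\<mu>, T') \<Rightarrow> extend_tableau n m \<nu> \<mu> T')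
        = (case a of (\<mu>, T') \<Rightarrow> x n ^ strip_size n \<nu> \<mu> * ?W m \<mu> T')"
      using monomial_remove_last_letter[of "extend_tableau n m \<nu> \<mu> T'" x] ext inv a
      unfolding bounded_SSYT_def by simp
  next
    fix T assume T: "T \<in> bounded_SSYT n \<nu> b"
    then have "T \<in> SSYT n \<nu>"
      unfolding bounded_SSYT_def by simp
    then show "(lower_shape n \<nu> T, restrict_tableau m (lower_shape n \<nu> T) T) \<in> Sigma ?P ?S'"
      using lower_shape_in_strip_shapes[OF T] lower_shape_last restrict_tableau_bounded[OF T] by simp
    show "(case (lower_shape n \<nu> T, restrict_tableau m (lower_shape n \<nu> T) T) of
             (\<mu>, T') \<Rightarrow> extend_tableau n m \<nu> \<mu> T') = T"
      using extend_restrict_tableau[OF T] by simp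
  qed
  finally show ?thesis
    unfolding row_bound_sum_eq by simp
qed

end

section \<open>The flagged Jacobi--Trudi identity\<close>

lemma jt_det_last_row_zero:
  assumes part: "is_partition (Suc m) \<mu>" and last: "\<mu> (Suc m) > 0"
    and B: "\<And>j. 1 \<le> j \<Longrightarrow> j \<le> Suc m \<Longrightarrow> B j \<le> m"
  shows "jt_det (Suc m) \<mu> B x = 0"
  unfolding jt_det_def
proof (rule det_mat_zero_row[of m])
  fix j assume j: "j < Suc m"
  have "\<mu> (Suc m) \<le> \<mu> (j+1)"
    using part j chain_antimono_between[where a = 1 and b = "Suc m" and f = \<mu> and i = "j+1" and j = "Suc m"]
    unfolding is_partition_def by auto
  then have "int (\<mu> (j+1)) - int (j+1) + int (m+1) > 0"
    using last j by linarith
  moreover have "B (j+1) < m + 1"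
    using B[of "j+1"] j by simp
  ultimately show "hcomp (int (\<mu> (j+1)) - int (j+1) + int (m+1)) (m+1) (B (j+1)) x = 0"
    by (rule hcomp_empty_range)
qed simp

lemma jt_det_last_row_empty:
  assumes last: "\<mu> (Suc m) = 0" and B: "\<And>j. 1 \<le> j \<Longrightarrow> j \<le> Suc m \<Longrightarrow> B j \<le> m"
  shows "jt_det (Suc m) \<mu> B x = jt_det m \<mu> B x"
  unfolding jt_det_def
proof (rule det_mat_last_row_unit)
  fix j assume j: "j \<le> m"
  show "hcomp (int (\<mu> (j+1)) - int (j+1) + int (m+1)) (m+1) (B (j+1)) x = (if j = m then 1 else 0)"
  proof (cases "j = m")
    case False
    then have "int (\<mu> (j+1)) - int (j+1) + int (m+1) > 0"
      using j by linarith
    moreover have "B (j+1) < m + 1"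
      using B[of "j+1"] j by simp
    ultimately show ?thesis
      using False hcomp_empty_range by simp
  qed (use last in simp)
qed

theorem row_bound_sum_eq_jt_det:
  fixes x :: "nat \<Rightarrow> 'a::comm_ring_1"
  assumes "is_partition n \<nu>" "upper_flag n b"
  shows "row_bound_sum n \<nu> b x = jt_det n \<nu> b x"
  using assms
proof (induction n arbitrary: \<nu> b)
  case (Suc m)
  let ?n = "Suc m"
  let ?b = "\<lambda>j. min (b j) m"
  let ?B = "\<lambda>j. if j \<le> ?n then min (b j) m else b j"
  let ?S = "strip_shapes ?n \<nu> b ?n"
  let ?P = "{\<mu> \<in> ?S. \<mu> ?n = 0}"
  have bound: "upper_tuple ?n b"
    using Suc.prems unfolding upper_flag_def by simp
  have B: "?B j \<le> m" if "j \<le> ?n" for j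
    using that by simp
  have "jt_det ?n \<nu> b x = (\<Sum>\<mu>\<in>?S. x ?n ^ strip_size ?n \<nu> \<mu> * jt_det ?n \<mu> ?B x)"
    using Suc.prems by (intro jt_det_pieri) auto
  also have "\<dots> = (\<Sum>\<mu>\<in>?P. x ?n ^ strip_size ?n \<nu> \<mu> * jt_det ?n \<mu> ?B x)"
  proof (rule sum.mono_neutral_right[OF finite_strip_shapes])
    show "\<forall>\<mu>\<in>?S - ?P. x ?n ^ strip_size ?n \<nu> \<mu> * jt_det ?n \<mu> ?B x = 0"
    proof
      fix \<mu> assume "\<mu> \<in> ?S - ?P"
      then have "is_partition ?n \<mu>" "\<mu> ?n > 0"
        using strip_shapes_is_partition[OF _ Suc.prems(1)] by auto
      then show "x ?n ^ strip_size ?n \<nu> \<mu> * jt_det ?n \<mu> ?B x = 0"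
        using jt_det_last_row_zero[of m \<mu> ?B x] by simp
    qed
  qed auto
  also have "\<dots> = (\<Sum>\<mu>\<in>?P. x ?n ^ strip_size ?n \<nu> \<mu> * row_bound_sum m \<mu> ?b x)"
  proof (intro sum.cong refl arg_cong[where f = "\<lambda>z. _ * z"])
    fix \<mu> assume \<mu>: "\<mu> \<in> ?P"
    have "is_partition m \<mu>"
      using strip_shapes_is_partition[OF _ Suc.prems(1)] \<mu> unfolding is_partition_def by auto
    moreover have "upper_flag m ?b"
      using Suc.prems unfolding upper_flag_def upper_tuple_def by (auto simp: min.coboundedI1)
    ultimately have "row_bound_sum m \<mu> ?b x = jt_det m \<mu> ?b x"
      by (rule Suc.IH)
    also have "\<dots> = jt_det m \<mu> ?B x"
      by (intro jt_det_cong) auto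
    also have "\<dots> = jt_det ?n \<mu> ?B x"
      using \<mu> B by (intro jt_det_last_row_empty[symmetric]) auto
    finally show "jt_det ?n \<mu> ?B x = row_bound_sum m \<mu> ?b x"
      by simp
  qed
  also have "\<dots> = row_bound_sum ?n \<nu> b x"
    using Suc.prems(1) bound by (intro row_bound_sum_remove_last_letter[symmetric]) auto
  finally show ?case
    by simp
qed simp

section \<open>Column operations on Jacobi--Trudi matrices\<close>

text \<open>Entry in row \<open>i\<close> (counted from 0, as in \<open>mat\<close>) of column \<open>j\<close> (counted from 1) of a
  Jacobi--Trudi matrix whose flag has value \<open>t\<close> at \<open>j\<close>.\<close>

definition jt_col :: "(nat \<Rightarrow> nat) \<Rightarrow> (nat \<Rightarrow> 'a::comm_ring_1) \<Rightarrow> nat \<Rightarrow> nat \<Rightarrow> nat \<Rightarrow> 'a" where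
  "jt_col lam x j t i = hcomp (int (lam j) - int j + int (i+1)) (i+1) t x"

lemma jt_det_eq_jt_col: "jt_det n lam b x = det (mat n n (\<lambda>(i,j). jt_col lam x (j+1) (b (j+1)) i))"
  unfolding jt_det_def jt_col_def by simp

lemma jt_col_split:
  assumes flat: "lam (j+1) = lam j" and "j \<le> r"
  shows "r \<le> t \<Longrightarrow> jt_col lam x j t i = jt_col lam x j r i + (\<Sum>s=Suc r..t. x s * jt_col lam x (j+1) s i)"
proof (induction t)
  case (Suc t)
  show ?case
  proof (cases "Suc t = r")
    case False
    then have "r \<le> t"
      using Suc.prems by simp
    let ?u = "int (lam j) - int j + int (i+1)"
    have "i + 1 \<le> Suc t \<or> ?u \<noteq> 1"
      using \<open>r \<le> t\<close> \<open>j \<le> r\<close> by auto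
    then have "jt_col lam x j (Suc t) i = jt_col lam x j t i + x (Suc t) * hcomp (?u - 1) (i+1) (Suc t) x"
      unfolding jt_col_def by (rule hcomp_Suc)
    also have "?u - 1 = int (lam (j+1)) - int (j+1) + int (i+1)"
      using flat by simp
    finally show ?thesis
      using Suc.IH \<open>r \<le> t\<close> by (simp add: jt_col_def sum.cl_ivl_Suc add.assoc)
  qed simp
qed simp

text \<open>Where \<open>lam\<close> is constant on \<open>[j, k]\<close>, lowering the bound of column \<open>j\<close> from \<open>B\<close> to \<open>r\<close>
  amounts to subtracting a combination of the columns \<open>j+1, \<dots>, k\<close> with bound \<open>B\<close>, provided
  the bound drops by at most \<open>k - j\<close>.\<close>

lemma jt_col_combination:
  fixes x :: "nat \<Rightarrow> 'a::comm_ring_1"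
  assumes flat: "\<forall>j. p \<le> j \<and> j < k \<longrightarrow> lam (j+1) = lam j" and kB: "k \<le> B"
  shows "p \<le> j \<Longrightarrow> j \<le> k \<Longrightarrow> int B - (int k - int j) \<le> int r \<Longrightarrow> r \<le> B
    \<Longrightarrow> \<exists>d. d j = 1 \<and> (\<forall>i. jt_col lam x j r i = (\<Sum>l\<in>{j..k}. d l * jt_col lam x l B i))"
proof (induction "k - j" arbitrary: j r)
  case 0
  then have "j = k" "r = B"
    by auto
  then show ?case
    by (intro exI[of _ "\<lambda>l. if l = k then 1 else 0"]) simp
next
  case (Suc q)
  then have jk: "j < k" and jr: "j \<le> r"
    using kB by linarith+
  have flat_j: "lam (j+1) = lam j"
    using flat Suc.prems jk by simp
  have "\<forall>s\<in>{Suc r..B}. \<exists>d. d (j+1) = 1 \<and> (\<forall>i. jt_col lam x (j+1) s i = (\<Sum>l\<in>{j+1..k}. d l * jt_col lam x l B i))"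
    using Suc.hyps Suc.prems jk by auto
  then obtain D where D: "\<And>s. s \<in> {Suc r..B} \<Longrightarrow>
      \<forall>i. jt_col lam x (j+1) s i = (\<Sum>l\<in>{j+1..k}. D s l * jt_col lam x l B i)"
    by metis
  define d where "d l = (if l = j then 1 else - (\<Sum>s=Suc r..B. x s * D s l))" for l
  have "jt_col lam x j r i = (\<Sum>l\<in>{j..k}. d l * jt_col lam x l B i)" for i
  proof -
    have "(\<Sum>l\<in>{Suc j..k}. d l * jt_col lam x l B i)
        = - (\<Sum>s=Suc r..B. x s * (\<Sum>l\<in>{Suc j..k}. D s l * jt_col lam x l B i))"
      unfolding d_def
      by (simp add: sum_negf sum_distrib_left sum_distrib_right mult.assoc sum.swap[of _ "{Suc j..k}"])
    also have "\<dots> = - (\<Sum>s=Suc r..B. x s * jt_col lam x (j+1) s i)"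
      using D by simp
    finally have "(\<Sum>l\<in>{j..k}. d l * jt_col lam x l B i)
        = jt_col lam x j B i - (\<Sum>s=Suc r..B. x s * jt_col lam x (j+1) s i)"
      using jk by (simp add: sum.atLeast_Suc_atMost d_def)
    also have "\<dots> = jt_col lam x j r i"
      using jt_col_split[OF flat_j jr, of B x i] Suc.prems by simp
    finally show ?thesis
      by simp
  qed
  moreover have "d j = 1"
    by (simp add: d_def)
  ultimately show ?case
    by blast
qed

section \<open>Critical indices and carrels\<close>

lemma is_crit_range: "is_crit lo hi \<beta> c \<Longrightarrow> lo < hi \<Longrightarrow> lo < c \<and> c \<le> hi"
  by (induction rule: is_crit.induct) auto

lemma is_crit_parent:
  assumes "is_crit lo hi \<beta> c" "c \<noteq> hi"
  obtains w where "is_crit lo hi \<beta> w" "c < w" "jump \<beta> w c"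
    "\<forall>x'. lo < x' \<and> x' < w \<and> jump \<beta> w x' \<longrightarrow> x' \<le> c"
  using assms by (cases rule: is_crit.cases) auto

lemma is_crit_below_jump:
  assumes y: "is_crit lo hi \<beta> y" and i: "lo < i" "i < y" "jump \<beta> y i"
  obtains c where "is_crit lo hi \<beta> c" "i \<le> c" "c < y"
proof -
  let ?X = "{x'. lo < x' \<and> x' < y \<and> jump \<beta> y x'}"
  have fin: "finite ?X"
    by (rule finite_subset[of _ "{..<y}"]) auto
  have "i \<in> ?X"
    using i by simp
  then have "Max ?X \<in> ?X"
    using fin by (intro Max_in) auto
  moreover have "i \<le> Max ?X"
    using fin \<open>i \<in> ?X\<close> by (rule Max_ge)
  moreover have "is_crit lo hi \<beta> (Max ?X)"
  proof (rule is_crit.step[OF y])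
    show "lo < Max ?X" "Max ?X < y" "jump \<beta> y (Max ?X)"
      using \<open>Max ?X \<in> ?X\<close> by auto
    show "\<forall>x'. lo < x' \<and> x' < y \<and> jump \<beta> y x' \<longrightarrow> x' \<le> Max ?X"
      using fin by auto
  qed
  ultimately show ?thesis
    using that by blast
qed

abbreviation carrel_start :: "nat \<Rightarrow> (nat \<Rightarrow> nat) \<Rightarrow> nat \<Rightarrow> nat" where
  "carrel_start n lam i \<equiv> qq n lam (carrel_of n lam i - 1)"

abbreviation carrel_end :: "nat \<Rightarrow> (nat \<Rightarrow> nat) \<Rightarrow> nat \<Rightarrow> nat" where
  "carrel_end n lam i \<equiv> qq n lam (carrel_of n lam i)"

context
  fixes n :: nat and lam :: "nat \<Rightarrow> nat"
  assumes n: "1 \<le> n"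
begin

lemma Rset_bounds: "q \<in> Rset n lam \<Longrightarrow> 1 \<le> q \<and> q < n"
  unfolding Rset_def using n by auto

lemma finite_Rset: "finite (Rset n lam)"
  by (rule finite_subset[of _ "{..n}"]) (auto simp: Rset_def)

definition carrel_list :: "nat list" where
  "carrel_list = sorted_list_of_set (Rset n lam \<union> {0, n})"

lemma qq_eq_nth: "qq n lam h = carrel_list ! h"
  unfolding qq_def carrel_list_def ..

lemma set_carrel_list: "set carrel_list = Rset n lam \<union> {0, n}"
  unfolding carrel_list_def using finite_Rset by (intro set_sorted_list_of_set) simp

lemma length_carrel_list: "length carrel_list = rr n lam + 2"
proof -
  have "0 \<notin> Rset n lam" "n \<notin> Rset n lam" "0 \<noteq> n"
    using Rset_bounds n by force+
  then have "card (Rset n lam \<union> {0, n}) = rr n lam + 2"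
    using finite_Rset unfolding rr_def by (simp add: card_insert_if)
  then show ?thesis
    unfolding carrel_list_def by (metis length_sorted_list_of_set)
qed

lemma qq_strict_mono: "h < h' \<Longrightarrow> h' \<le> rr n lam + 1 \<Longrightarrow> qq n lam h < qq n lam h'"
  unfolding qq_eq_nth
  using sorted_wrt_nth_less[OF strict_sorted_list_of_set[of "Rset n lam \<union> {0, n}", folded carrel_list_def]]
    length_carrel_list
  by simp

lemma qq_mono: "h \<le> h' \<Longrightarrow> h' \<le> rr n lam + 1 \<Longrightarrow> qq n lam h \<le> qq n lam h'"
  using qq_strict_mono by (cases "h = h'") (auto simp: less_imp_le)

lemma qq_in: "h \<le> rr n lam + 1 \<Longrightarrow> qq n lam h \<in> Rset n lam \<union> {0, n}"
  unfolding qq_eq_nth set_carrel_list[symmetric] using length_carrel_list by simp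

lemma qq_le: "h \<le> rr n lam + 1 \<Longrightarrow> qq n lam h \<le> n"
  using qq_in Rset_bounds by fastforce

lemma qq_surj:
  assumes "q \<in> Rset n lam \<union> {0, n}"
  obtains h where "h \<le> rr n lam + 1" "qq n lam h = q"
proof -
  obtain h where "h < length carrel_list" "carrel_list ! h = q"
    using assms unfolding set_carrel_list[symmetric] in_set_conv_nth by blast
  then show ?thesis
    using that[of h] length_carrel_list unfolding qq_eq_nth by (simp add: less_Suc_eq_le)
qed

lemma qq_0: "qq n lam 0 = 0"
proof -
  obtain h where "h \<le> rr n lam + 1" "qq n lam h = 0"
    using qq_surj[of 0] by auto
  then show ?thesis
    using qq_mono[of 0 h] by simp
qed

lemma qq_last: "qq n lam (rr n lam + 1) = n"
proof -
  obtain h where "h \<le> rr n lam + 1" "qq n lam h = n"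
    using qq_surj[of n] by auto
  then show ?thesis
    using qq_mono[of h "rr n lam + 1"] qq_le[of "rr n lam + 1"] by simp
qed

lemma carrel_of_eqI:
  assumes h: "1 \<le> h" "h \<le> rr n lam + 1" and i: "qq n lam (h-1) < i" "i \<le> qq n lam h"
  shows "carrel_of n lam i = h"
  unfolding carrel_of_def
proof (rule the_equality)
  fix h' assume h': "1 \<le> h' \<and> h' \<le> rr n lam + 1 \<and> qq n lam (h' - 1) < i \<and> i \<le> qq n lam h'"
  show "h' = h"
  proof (rule ccontr)
    assume "h' \<noteq> h"
    then consider "h' \<le> h - 1" | "h \<le> h' - 1"
      by linarith
    then show False
    proof cases
      case 1
      then have "qq n lam h' \<le> qq n lam (h-1)"
        using h by (intro qq_mono) auto
      with h' i show False
        by simp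
    next
      case 2
      then have "qq n lam h \<le> qq n lam (h'-1)"
        using h' by (intro qq_mono) auto
      with h' i show False
        by simp
    qed
  qed
qed (use h i in simp)

lemma carrel_of_bounds:
  assumes i: "1 \<le> i" "i \<le> n"
  shows "1 \<le> carrel_of n lam i" "carrel_of n lam i \<le> rr n lam + 1"
    "qq n lam (carrel_of n lam i - 1) < i" "i \<le> qq n lam (carrel_of n lam i)"
proof -
  let ?h = "LEAST h. i \<le> qq n lam h"
  have ex: "i \<le> qq n lam (rr n lam + 1)"
    using qq_last i by simp
  have hle: "?h \<le> rr n lam + 1"
    using ex by (rule Least_le)
  have ih: "i \<le> qq n lam ?h"
    using ex by (rule LeastI)
  have h1: "1 \<le> ?h"
    using ih qq_0 i by (cases "?h = 0") auto
  have lt: "qq n lam (?h - 1) < i"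
  proof (rule ccontr)
    assume "\<not> qq n lam (?h - 1) < i"
    then have "?h \<le> ?h - 1"
      by (intro Least_le) simp
    with h1 show False
      by simp
  qed
  have "carrel_of n lam i = ?h"
    by (rule carrel_of_eqI[OF h1 hle lt ih])
  with h1 hle lt ih show "1 \<le> carrel_of n lam i" "carrel_of n lam i \<le> rr n lam + 1"
    "qq n lam (carrel_of n lam i - 1) < i" "i \<le> qq n lam (carrel_of n lam i)"
    by simp_all
qed

lemma carrel_bounds:
  "1 \<le> i \<Longrightarrow> i \<le> n \<Longrightarrow> carrel_start n lam i < i \<and> i \<le> carrel_end n lam i \<and> carrel_end n lam i \<le> n"
  using carrel_of_bounds qq_le by auto

lemma carrel_of_eq:
  assumes "1 \<le> p" "p \<le> n" "p \<le> l" "l \<le> carrel_end n lam p"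
  shows "carrel_of n lam l = carrel_of n lam p"
  using carrel_of_eqI[of "carrel_of n lam p" l] carrel_of_bounds[of p] assms by auto

lemma lam_flat_in_carrel:
  assumes part: "is_partition n lam"
    and h: "1 \<le> h" "h \<le> rr n lam + 1" and i: "qq n lam (h-1) < i" "i < qq n lam h"
  shows "lam (i+1) = lam i"
proof -
  have "i \<notin> Rset n lam"
  proof
    assume "i \<in> Rset n lam"
    then obtain t where t: "t \<le> rr n lam + 1" "qq n lam t = i"
      using qq_surj by blast
    have "h - 1 \<le> rr n lam + 1"
      using h by simp
    then have "\<not> t \<le> h - 1"
      using qq_mono[of t "h-1"] t i by auto
    moreover have "\<not> h \<le> t"
      using qq_mono[of h t] t i by auto
    ultimately show False
      by simp
  qed
  moreover have "1 \<le> i" "i < n"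
    using i qq_le[OF h(2)] by auto
  ultimately show ?thesis
    using part unfolding Rset_def is_partition_def by (auto simp: not_less)
qed

section \<open>The platform\<close>

lemma xcrit_spec:
  assumes p: "1 \<le> p" "p \<le> n"
  shows "is_crit (carrel_start n lam p) (carrel_end n lam p) \<beta> (xcrit n lam \<beta> p)"
    and "p \<le> xcrit n lam \<beta> p" and "xcrit n lam \<beta> p \<le> carrel_end n lam p"
    and "\<And>c. is_crit (carrel_start n lam p) (carrel_end n lam p) \<beta> c \<Longrightarrow> p \<le> c \<Longrightarrow> xcrit n lam \<beta> p \<le> c"
proof -
  let ?P = "\<lambda>c. is_crit (carrel_start n lam p) (carrel_end n lam p) \<beta> c \<and> p \<le> c"
  have last: "?P (carrel_end n lam p)"
    using carrel_bounds[OF p] is_crit.start by blast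
  have x: "xcrit n lam \<beta> p = (LEAST c. ?P c)"
    unfolding xcrit_def crit_in_def by simp
  show "is_crit (carrel_start n lam p) (carrel_end n lam p) \<beta> (xcrit n lam \<beta> p)" "p \<le> xcrit n lam \<beta> p"
    unfolding x using LeastI[of ?P, OF last] by simp_all
  show "xcrit n lam \<beta> p \<le> carrel_end n lam p"
    unfolding x using last by (rule Least_le)
  show "\<And>c. is_crit (carrel_start n lam p) (carrel_end n lam p) \<beta> c \<Longrightarrow> p \<le> c \<Longrightarrow> xcrit n lam \<beta> p \<le> c"
    unfolding x by (rule Least_le) simp
qed

lemma xcrit_le_n: "1 \<le> p \<Longrightarrow> p \<le> n \<Longrightarrow> xcrit n lam \<beta> p \<le> n"
  using xcrit_spec(3)[of p \<beta>] carrel_bounds[of p] by linarith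

lemma xcrit_eq_within:
  assumes p: "1 \<le> p" "p \<le> n" and l: "p \<le> l" "l \<le> xcrit n lam \<beta> p"
  shows "xcrit n lam \<beta> l = xcrit n lam \<beta> p"
proof -
  have "carrel_of n lam l = carrel_of n lam p"
    using carrel_of_eq[OF p, of l] xcrit_spec(3)[of p \<beta>, OF p] l by linarith
  then have "xcrit n lam \<beta> l = (LEAST c. is_crit (carrel_start n lam p) (carrel_end n lam p) \<beta> c \<and> l \<le> c)"
    unfolding xcrit_def crit_in_def by simp
  also have "\<dots> = xcrit n lam \<beta> p"
  proof (rule Least_equality)
    show "is_crit (carrel_start n lam p) (carrel_end n lam p) \<beta> (xcrit n lam \<beta> p) \<and> l \<le> xcrit n lam \<beta> p"
      using xcrit_spec(1)[of p \<beta>, OF p] l by simp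
    fix c assume "is_crit (carrel_start n lam p) (carrel_end n lam p) \<beta> c \<and> l \<le> c"
    then show "xcrit n lam \<beta> p \<le> c"
      using xcrit_spec(4)[of p \<beta>, OF p, of c] l by simp
  qed
  finally show ?thesis .
qed

text \<open>No jump of \<open>\<beta>\<close> leads back from \<open>x(p)\<close> to an index of \<open>[p, x(p)]\<close>: it would produce
  a smaller critical index \<open>\<ge> p\<close>.\<close>

lemma beta_xcrit_diff_le:
  assumes p: "1 \<le> p" "p \<le> n" and j: "p \<le> j" "j \<le> xcrit n lam \<beta> p"
  shows "int (\<beta> (xcrit n lam \<beta> p)) - int (\<beta> j) \<le> int (xcrit n lam \<beta> p) - int j"
proof (rule ccontr)
  let ?k = "xcrit n lam \<beta> p"
  assume "\<not> ?thesis"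
  then have "jump \<beta> ?k j" "j \<noteq> ?k"
    unfolding jump_def by auto
  moreover have "carrel_start n lam p < j"
    using carrel_bounds[OF p] j by simp
  moreover have "j < ?k"
    using j \<open>j \<noteq> ?k\<close> by simp
  ultimately obtain c where "is_crit (carrel_start n lam p) (carrel_end n lam p) \<beta> c" "j \<le> c" "c < ?k"
    using is_crit_below_jump[OF xcrit_spec(1)[of p \<beta>, OF p]] by blast
  then show False
    using xcrit_spec(4)[of p \<beta>, OF p] j by force
qed

lemma lam_eq_xcrit:
  assumes part: "is_partition n lam" and p: "1 \<le> p" "p \<le> n" and j: "p \<le> j" "j \<le> xcrit n lam \<beta> p"
  shows "lam j = lam (xcrit n lam \<beta> p)"
proof -
  let ?k = "xcrit n lam \<beta> p"
  have flat: "lam (Suc j) = lam j" if "p \<le> j" "j < ?k" for j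
    using that lam_flat_in_carrel[OF part, of "carrel_of n lam p" j] carrel_of_bounds[OF p] xcrit_spec(3)[of p \<beta>, OF p]
    by auto
  have "lam j \<le> lam ?k"
    using j flat chain_mono_between[where a = p and b = ?k and f = lam and i = j and j = ?k] by simp
  moreover have "lam ?k \<le> lam j"
    using j flat chain_antimono_between[where a = p and b = ?k and f = lam and i = j and j = ?k] by simp
  ultimately show ?thesis
    by simp
qed

lemma platform_bounds:
  assumes up: "upper_tuple n \<beta>" and p: "1 \<le> p" "p \<le> n"
  shows "p \<le> platform n lam \<beta> p \<and> platform n lam \<beta> p \<le> n"
proof -
  let ?k = "xcrit n lam \<beta> p"
  have "p \<le> ?k" "?k \<le> n"
    using xcrit_spec(2)[of p \<beta>, OF p] xcrit_le_n[OF p] by auto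
  moreover have "?k \<le> \<beta> ?k \<and> \<beta> ?k \<le> n"
    using up p calculation unfolding upper_tuple_def by simp
  ultimately show ?thesis
    unfolding platform_def by simp
qed

lemma platform_mono_within:
  assumes i: "1 \<le> i" "i < carrel_end n lam i" "i \<le> n"
  shows "platform n lam \<beta> i \<le> platform n lam \<beta> (i+1)"
proof -
  let ?lo = "carrel_start n lam i" and ?hi = "carrel_end n lam i"
  let ?k = "xcrit n lam \<beta> i" and ?y = "xcrit n lam \<beta> (i+1)"
  have i1: "1 \<le> i+1" "i+1 \<le> n"
    using i carrel_bounds[of i] by auto
  have same: "carrel_of n lam (i+1) = carrel_of n lam i"
    using carrel_of_eq[of i "i+1"] i by simp
  show ?thesis
  proof (cases "i < ?k")
    case True
    then show ?thesis
      using xcrit_eq_within[of i "i+1" \<beta>] i unfolding platform_def by simp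
  next
    case False
    then have ki: "?k = i"
      using xcrit_spec(2)[of i \<beta>] i by simp
    then have crit_i: "is_crit ?lo ?hi \<beta> i"
      using xcrit_spec(1)[of i \<beta>] i by simp
    have "i \<noteq> ?hi"
      using i by simp
    with crit_i obtain w where w: "is_crit ?lo ?hi \<beta> w" "i < w" "jump \<beta> w i"
      "\<forall>x'. ?lo < x' \<and> x' < w \<and> jump \<beta> w x' \<longrightarrow> x' \<le> i"
      by (rule is_crit_parent)
    have y: "i + 1 \<le> ?y" "?y \<le> w"
      using xcrit_spec(2,4)[of "i+1" \<beta>, OF i1] w same by auto
    text \<open>Either \<open>x(i+1)\<close> is the parent \<open>w\<close> of \<open>i\<close>, reached by a jump, or it lies strictly
      between and, not being reachable by a jump from \<open>w\<close>, has \<open>\<beta>\<close> at least \<open>\<beta>\<^sub>w - (w - x(i+1)) > \<beta>\<^sub>i\<close>.\<close>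
    have "\<beta> i < \<beta> ?y"
    proof (cases "?y = w")
      case True
      then show ?thesis
        using w(2,3) unfolding jump_def by simp
    next
      case False
      have "?lo < ?y"
        using carrel_bounds[of i] i y by simp
      then have "\<not> jump \<beta> w ?y"
        using w(4) y False by fastforce
      then show ?thesis
        using w(3) y False unfolding jump_def by simp
    qed
    then show ?thesis
      using ki unfolding platform_def by simp
  qed
qed

lemma platform_mono_across:
  assumes flag: "flag_critical n lam \<beta>" and i: "1 \<le> i" "i < n" "carrel_end n lam i = i"
  shows "platform n lam \<beta> i \<le> platform n lam \<beta> (i+1)"
proof -
  let ?h = "carrel_of n lam i"
  have h: "1 \<le> ?h" "?h \<le> rr n lam + 1"
    using carrel_of_bounds[of i] i by auto
  have hr: "?h \<le> rr n lam"
    using qq_last i h by (cases "?h = rr n lam + 1") auto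
  have next_carrel: "qq n lam ?h < qq n lam (?h + 1)"
    using qq_strict_mono[of ?h "?h+1"] hr by simp
  have "carrel_of n lam (i+1) = ?h + 1"
    using i next_carrel hr by (intro carrel_of_eqI) auto
  then have "xcrit n lam \<beta> (i+1) = (LEAST c. crit_in n lam \<beta> (?h+1) c \<and> i+1 \<le> c)"
    unfolding xcrit_def by simp
  also have "\<dots> = (LEAST c. crit_in n lam \<beta> (?h+1) c)"
  proof -
    have "i + 1 \<le> c" if "crit_in n lam \<beta> (?h+1) c" for c
      using is_crit_range[of "qq n lam ?h" "qq n lam (?h+1)" \<beta> c] that next_carrel i
      unfolding crit_in_def by simp
    then show ?thesis
      by (intro arg_cong[where f = Least] ext) blast
  qed
  finally have "\<beta> (qq n lam ?h) \<le> \<beta> (xcrit n lam \<beta> (i+1))"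
    using flag hr h unfolding flag_critical_def by auto
  moreover have "xcrit n lam \<beta> i = i"
    using xcrit_spec(2,3)[of i \<beta>] i by simp
  ultimately show ?thesis
    using i unfolding platform_def by simp
qed

lemma platform_mono:
  assumes "flag_critical n lam \<beta>" "1 \<le> i" "i < n"
  shows "platform n lam \<beta> i \<le> platform n lam \<beta> (i+1)"
  using platform_mono_within[of i \<beta>] platform_mono_across[OF assms] carrel_bounds[of i] assms(2,3)
  by (cases "i < carrel_end n lam i") auto

text \<open>An entry in row \<open>i\<close> is at least \<open>x(i) - i\<close> smaller than the entry below it in row \<open>x(i)\<close>,
  and the platform bound there exceeds \<open>\<beta>\<^sub>i\<close> by at most \<open>x(i) - i\<close>.\<close>

lemma SSYT_platform_bound_imp_beta_bound:
  assumes part: "is_partition n lam" and T: "T \<in> SSYT n lam"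
    and bound: "\<forall>i j. in_shape n lam i j \<longrightarrow> T i j \<le> platform n lam \<beta> i"
    and s: "in_shape n lam i j"
  shows "T i j \<le> \<beta> i"
proof -
  have i: "1 \<le> i" "i \<le> n" and j: "1 \<le> j" "j \<le> lam i"
    using s unfolding in_shape_def by auto
  let ?k = "xcrit n lam \<beta> i"
  have k: "i \<le> ?k" "?k \<le> n"
    using xcrit_spec(2)[of i \<beta>] xcrit_le_n[of i \<beta>] i by auto
  have lam_k: "lam ?k = lam i"
    using lam_eq_xcrit[OF part i, of i \<beta>] k by simp
  have "T i j \<le> T i (lam i)"
    using SSYT_row_mono[OF T i j] by simp
  moreover have "T i (lam i) + (?k - i) \<le> T ?k (lam i)"
    using SSYT_col_chain[OF T part i(1) k] j lam_k by simp
  moreover have "T ?k (lam i) \<le> platform n lam \<beta> ?k"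
    using bound k i j lam_k unfolding in_shape_def by auto
  moreover have "platform n lam \<beta> ?k = \<beta> ?k"
    using xcrit_eq_within[of i ?k \<beta>] k i unfolding platform_def by simp
  moreover have "int (\<beta> ?k) - int (\<beta> i) \<le> int ?k - int i"
    using beta_xcrit_diff_le[of i i \<beta>] i k by simp
  ultimately show ?thesis
    using k by linarith
qed

lemma bounded_SSYT_platform:
  assumes part: "is_partition n lam" and below: "\<forall>i. 1 \<le> i \<and> i \<le> n \<longrightarrow> \<beta> i \<le> platform n lam \<beta> i"
  shows "bounded_SSYT n lam \<beta> = bounded_SSYT n lam (platform n lam \<beta>)"
proof -
  have "(\<forall>i j. in_shape n lam i j \<longrightarrow> T i j \<le> \<beta> i) \<longleftrightarrow> (\<forall>i j. in_shape n lam i j \<longrightarrow> T i j \<le> platform n lam \<beta> i)"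
    if T: "T \<in> SSYT n lam" for T
    using below SSYT_platform_bound_imp_beta_bound[OF part T] unfolding in_shape_def
    by (meson le_trans)
  then show ?thesis
    unfolding bounded_SSYT_def by blast
qed

definition raised_flag :: "(nat \<Rightarrow> nat) \<Rightarrow> nat \<Rightarrow> nat \<Rightarrow> nat" where
  "raised_flag \<beta> p j = (if p \<le> j then platform n lam \<beta> j else \<beta> j)"

lemma jt_det_raised_flag_Suc:
  fixes x :: "nat \<Rightarrow> 'a::comm_ring_1"
  assumes part: "is_partition n lam" and up: "upper_tuple n \<beta>"
    and below: "\<forall>i. 1 \<le> i \<and> i \<le> n \<longrightarrow> \<beta> i \<le> platform n lam \<beta> i"
    and p: "1 \<le> p" "p \<le> n"
  shows "jt_det n lam (raised_flag \<beta> (Suc p)) x = jt_det n lam (raised_flag \<beta> p) x"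
proof -
  let ?k = "xcrit n lam \<beta> p"
  let ?G = "\<lambda>i j. jt_col lam x (j+1) (raised_flag \<beta> p (j+1)) i"
  let ?M = "\<lambda>c. mat n n (\<lambda>(i,j). if j = p - 1 then c i else ?G i j)"
  have k: "p \<le> ?k" "?k \<le> n"
    using xcrit_spec(2)[of p \<beta>] xcrit_le_n[of p \<beta>] p by auto
  have raised: "raised_flag \<beta> p l = \<beta> ?k" if "p \<le> l" "l \<le> ?k" for l
    using xcrit_eq_within[of p l \<beta>] that p unfolding raised_flag_def platform_def by simp
  have flat: "\<forall>j. p \<le> j \<and> j < ?k \<longrightarrow> lam (j+1) = lam j"
  proof (intro allI impI)
    fix j assume "p \<le> j \<and> j < ?k"
    then have "lam j = lam ?k" "lam (j+1) = lam ?k"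
      using lam_eq_xcrit[OF part p, of j \<beta>] lam_eq_xcrit[OF part p, of "j+1" \<beta>] by auto
    then show "lam (j+1) = lam j"
      by simp
  qed
  have "?k \<le> \<beta> ?k"
    using up k p unfolding upper_tuple_def by auto
  moreover have "int (\<beta> ?k) - (int ?k - int p) \<le> int (\<beta> p)"
    using beta_xcrit_diff_le[of p p \<beta>] p k by simp
  moreover have "\<beta> p \<le> \<beta> ?k"
    using below p unfolding platform_def by blast
  ultimately obtain d where d: "d p = 1" "\<And>i. jt_col lam x p (\<beta> p) i = (\<Sum>l\<in>{p..?k}. d l * jt_col lam x l (\<beta> ?k) i)"
    using jt_col_combination[OF flat, of "\<beta> ?k" p "\<beta> p" x] k by auto
  have "jt_det n lam (raised_flag \<beta> (Suc p)) x = det (?M (\<lambda>i. \<Sum>l\<in>{p..?k}. d l * jt_col lam x l (\<beta> ?k) i))"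
    unfolding jt_det_eq_jt_col using p d(2)
    by (intro arg_cong[where f = det] eq_matI) (auto simp: raised_flag_def)
  also have "\<dots> = (\<Sum>l\<in>{p..?k}. d l * det (?M (jt_col lam x l (\<beta> ?k))))"
    using p by (intro det_mat_sum_col) auto
  also have "\<dots> = d p * det (?M (jt_col lam x p (\<beta> ?k)))
      + (\<Sum>l\<in>{p..?k} - {p}. d l * det (?M (jt_col lam x l (\<beta> ?k))))"
    using k by (subst sum.remove[of _ p]) auto
  also have "(\<Sum>l\<in>{p..?k} - {p}. d l * det (?M (jt_col lam x l (\<beta> ?k)))) = 0"
  proof (rule sum.neutral, rule ballI)
    text \<open>These terms have two equal columns: every column \<open>l \<in> (p, x(p)]\<close> has been raised to
      \<open>\<beta>\<^bsub>x(p)\<^esub>\<close> already.\<close>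
    fix l assume l: "l \<in> {p..?k} - {p}"
    have "det (?M (jt_col lam x l (\<beta> ?k))) = 0"
      using l p k raised[of l] by (intro det_mat_identical_cols[of "p - 1" n "l - 1"]) auto
    then show "d l * det (?M (jt_col lam x l (\<beta> ?k))) = 0"
      by simp
  qed
  also have "?M (jt_col lam x p (\<beta> ?k)) = mat n n (\<lambda>(i,j). ?G i j)"
    using p k raised[of p] by (intro eq_matI) auto
  finally show ?thesis
    unfolding jt_det_eq_jt_col d(1) by simp
qed

lemma jt_det_raised_flag:
  fixes x :: "nat \<Rightarrow> 'a::comm_ring_1"
  assumes part: "is_partition n lam" and up: "upper_tuple n \<beta>"
    and below: "\<forall>i. 1 \<le> i \<and> i \<le> n \<longrightarrow> \<beta> i \<le> platform n lam \<beta> i"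
  shows "q \<le> n \<Longrightarrow> jt_det n lam (raised_flag \<beta> (n+1)) x = jt_det n lam (raised_flag \<beta> (n+1-q)) x"
proof (induction q)
  case (Suc q)
  then have "n + 1 - q = Suc (n - q)"
    by simp
  with Suc jt_det_raised_flag_Suc[OF part up below, of "n - q" x] show ?case
    by simp
qed simp

lemma row_bound_sum_eq_jt_det_critical:
  fixes x :: "nat \<Rightarrow> 'a::comm_ring_1"
  assumes part: "is_partition n lam" and up: "upper_tuple n \<beta>" and flag: "flag_critical n lam \<beta>"
    and below: "\<forall>i. 1 \<le> i \<and> i \<le> n \<longrightarrow> \<beta> i \<le> platform n lam \<beta> i"
  shows "row_bound_sum n lam \<beta> x = jt_det n lam \<beta> x"
proof -
  have "upper_flag n (platform n lam \<beta>)"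
    using platform_bounds[OF up] platform_mono[OF flag] unfolding upper_flag_def upper_tuple_def by auto
  have "row_bound_sum n lam \<beta> x = row_bound_sum n lam (platform n lam \<beta>) x"
    unfolding row_bound_sum_eq bounded_SSYT_platform[OF part below] ..
  also have "\<dots> = jt_det n lam (platform n lam \<beta>) x"
    using part \<open>upper_flag n (platform n lam \<beta>)\<close> by (rule row_bound_sum_eq_jt_det)
  also have "\<dots> = jt_det n lam (raised_flag \<beta> 1) x"
    by (intro jt_det_cong) (auto simp: raised_flag_def)
  also have "\<dots> = jt_det n lam (raised_flag \<beta> (n+1)) x"
    using jt_det_raised_flag[OF part up below, of n x] by simp
  also have "\<dots> = jt_det n lam \<beta> x"
    by (intro jt_det_cong) (auto simp: raised_flag_def)
  finally show ?thesis .
qed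

end

theorem corollary5p2:
  fixes n :: nat and lam \<beta> :: "nat \<Rightarrow> nat" and x :: "nat \<Rightarrow> 'a::comm_ring_1"
  assumes "1 \<le> n"
    and "is_partition n lam"
    and "upper_tuple n \<beta>"
    and "\<beta> \<in> UGC n lam \<inter> UBP n lam"
  shows "row_bound_sum n lam \<beta> x =
         det (mat n n (\<lambda>(i, j). hcomp (int (lam (j+1)) - int (j+1) + int (i+1)) (i+1) (\<beta> (j+1)) x))"
proof -
  have "flag_critical n lam \<beta>" "\<forall>i. 1 \<le> i \<and> i \<le> n \<longrightarrow> \<beta> i \<le> platform n lam \<beta> i"
    using assms(4) unfolding UGC_def UBP_def by auto
  then have "row_bound_sum n lam \<beta> x = jt_det n lam \<beta> x"
    by (rule row_bound_sum_eq_jt_det_critical[OF assms(1-3)])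
  then show ?thesis
    unfolding jt_det_def .
qed

end
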